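(* Let $\delta_k\in(0,\overline\delta)$ with $\delta_k\to0$, and let $\ddot q_{\delta_k}\in\overline{\mathbb{Q}}_{\delta_k}(f)$ satisfy $\sup_k\|\ddot q_{\delta_k}\|_{L^{1,2}(\Omega_{\delta_k}\times\Omega_{\delta_k})}<\infty$. Suppose the measures $R_{\delta_k}\ddot q_{\delta_k}\,dx$ converge weakly to $\hat q\in\mathcal{M}(\overline\Omega;\mathbb{R}^n)$. Then for every $\phi\in C^1_c(\Omega)$, $-\int_\Omega\nabla\phi(x)\cdot d\hat q(x)=\int_\Omega f\phi\,dx$.
   Context: $n\ge2$, $\Omega\subset\mathbb{R}^n$ bounded connected open with Lipschitz boundary, $f\in L^2(\Omega)$, $\overline\delta>0$. For each $\delta\in(0,\overline\delta)$: $\Omega_\delta=\bigcup_{x\in\Omega}B(x,\delta)$; $\omega_\delta:\mathbb{R}^n\to[0,\infty)$ is radial, measurable, supported in $B(0,\delta)$, with $\int|z|^2\omega_\delta^2=K_{2,n}^{-1}$, $K_{2,n}=|\mathbb{S}^{n-1}|^{-1}\int_{\mathbb{S}^{n-1}}|s\cdot e|^2ds$. Functions on $\Omega$ are extended by zero; $\mathcal{G}_\delta u(x,x')=[u(x)-u(x')]\omega_\delta(x-x')$; $\mathcal{U}_{\delta,0}=\{u\in L^2(\Omega):\mathcal{G}_\delta u\in L^2(\Omega_\delta\times\Omega_\delta)\}$. $\mathbb{Q}_\delta$ is the set of $\ddot q\in L^2(\Omega_\delta\times\Omega_\delta)$ for which some $g\in L^2(\Omega)$ satisfies $\int_\Omega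 gv=-\int\int\ddot q\,\mathcal{G}_\delta v$ for all $v\in\mathcal{U}_{\delta,0}$; $\mathcal{D}_\delta\ddot q:=g$. $L^{1,2}(\Omega_\delta\times\Omega_\delta)$ has norm $\int_{\Omega_\delta}(\int_{\Omega_\delta}|\ddot q(x,x')|^2dx')^{1/2}dx$. $\mathcal{D}_\delta$ viewed as an unbounded operator $L^{1,2}\to L^2(\Omega)$ with domain $\mathbb{Q}_\delta$ is closable; $\overline{\mathcal{D}}_\delta$ denotes its closure, $\overline{\mathbb{Q}}_\delta$ its domain, $\overline{\mathbb{Q}}_\delta(f)=\{\ddot q\in\overline{\mathbb{Q}}_\delta:\overline{\mathcal{D}}_\delta\ddot q=f\}$. $R_\delta\ddot q(x)=\int_{\Omega_\delta}(x-x')\ddot q(x,x')\omega_\delta(x-x')dx'$. $\mathcal{M}(\overline\Omega;\mathbb{R}^n)$ is the space of finite $\mathbb{R}^n$-valued Radon measures on $\overline\Omega$. *)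

theory Defs
  imports "HOL-Analysis.Analysis"
begin

definition lipschitz_boundary :: "'a::euclidean_space set \<Rightarrow> bool" where
  "lipschitz_boundary \<Omega> \<longleftrightarrow>
    (\<forall>p\<in>frontier \<Omega>. \<exists>(e::'a) r h L (g::'a \<Rightarrow> real).
       norm e = 1 \<and> r > 0 \<and> h > 0 \<and>
       L-lipschitz_on {y. y \<bullet> e = 0} g \<and> g 0 = 0 \<and>
       (\<forall>y. y \<bullet> e = 0 \<and> norm y < r \<longrightarrow> \<bar>g y\<bar> < h / 2) \<and>
       \<Omega> \<inter> {p + y + t *\<^sub>R e | y t. y \<bullet> e = 0 \<and> norm y < r \<and> \<bar>t\<bar> < h}
         = {p + y + t *\<^sub>R e | y t. y \<bullet> e = 0 \<and> norm y < r \<and> \<bar>t\<bar> < h \<and> t < g y})"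

definition Omega_d :: "'a::euclidean_space set \<Rightarrow> real \<Rightarrow> 'a set" where
  "Omega_d \<Omega> \<delta> = (\<Union>x\<in>\<Omega>. ball x \<delta>)"

text \<open>Average of |s . e|^2 over the unit sphere, computed with the cone
(normalised surface) measure: the surface measure of A on the sphere is n times
the volume of the cone {t s | 0<t<=1, s in A}; hence the sphere average of a
function G equals the ball average of G(x/|x|). e is a fixed unit basis vector.\<close>
definition K2n :: "'a::euclidean_space itself \<Rightarrow> real" where
  "K2n _ = (let e = (SOME b. b \<in> (Basis::'a set)) in
     set_lebesgue_integral lebesgue (ball (0::'a) 1) (\<lambda>x. ((x /\<^sub>R norm x) \<bullet> e)\<^sup>2)
       / measure lebesgue (ball (0::'a) 1))"

definition admissible_kernels :: "real \<Rightarrow> (real \<Rightarrow> 'a::euclidean_space \<Rightarrow> real) \<Rightarrow> bool" where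
  "admissible_kernels dbar \<omega> \<longleftrightarrow>
    (\<forall>\<delta>. 0 < \<delta> \<and> \<delta> < dbar \<longrightarrow>
       \<omega> \<delta> \<in> borel_measurable borel \<and>
       (\<forall>z. \<omega> \<delta> z \<ge> 0) \<and>
       (\<forall>z w. norm z = norm w \<longrightarrow> \<omega> \<delta> z = \<omega> \<delta> w) \<and>
       (\<forall>z. norm z \<ge> \<delta> \<longrightarrow> \<omega> \<delta> z = 0) \<and>
       integral\<^sup>L lebesgue (\<lambda>z. (norm z)\<^sup>2 * (\<omega> \<delta> z)\<^sup>2) = inverse (K2n TYPE('a)))"

definition L2on :: "'b::euclidean_space set \<Rightarrow> ('b \<Rightarrow> real) \<Rightarrow> bool" where
  "L2on A u \<longleftrightarrow> set_borel_measurable lebesgue A u \<and>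
                 set_integrable lebesgue A (\<lambda>x. (u x)\<^sup>2)"

definition ext0 :: "'a set \<Rightarrow> ('a \<Rightarrow> real) \<Rightarrow> 'a \<Rightarrow> real" where
  "ext0 \<Omega> u x = (if x \<in> \<Omega> then u x else 0)"

definition Gop :: "'a::euclidean_space set \<Rightarrow> (real \<Rightarrow> 'a \<Rightarrow> real) \<Rightarrow> real
                   \<Rightarrow> ('a \<Rightarrow> real) \<Rightarrow> 'a \<times> 'a \<Rightarrow> real" where
  "Gop \<Omega> \<omega> \<delta> u p = (ext0 \<Omega> u (fst p) - ext0 \<Omega> u (snd p)) * \<omega> \<delta> (fst p - snd p)"

definition U0 :: "'a::euclidean_space set \<Rightarrow> (real \<Rightarrow> 'a \<Rightarrow> real) \<Rightarrow> real \<Rightarrow> ('a \<Rightarrow> real) set" where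
  "U0 \<Omega> \<omega> \<delta> = {u. L2on \<Omega> u \<and>
      L2on (Omega_d \<Omega> \<delta> \<times> Omega_d \<Omega> \<delta>) (Gop \<Omega> \<omega> \<delta> u)}"

text \<open>g is (a representative of) the nonlocal divergence D_delta q.\<close>
definition Drel :: "'a::euclidean_space set \<Rightarrow> (real \<Rightarrow> 'a \<Rightarrow> real) \<Rightarrow> real
                    \<Rightarrow> ('a \<times> 'a \<Rightarrow> real) \<Rightarrow> ('a \<Rightarrow> real) \<Rightarrow> bool" where
  "Drel \<Omega> \<omega> \<delta> q g \<longleftrightarrow> L2on \<Omega> g \<and>
     (\<forall>v\<in>U0 \<Omega> \<omega> \<delta>.
        set_lebesgue_integral lebesgue \<Omega> (\<lambda>x. g x * v x)
        = - set_lebesgue_integral lebesgue (Omega_d \<Omega> \<delta> \<times> Omega_d \<Omega> \<delta>)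
              (\<lambda>p. q p * Gop \<Omega> \<omega> \<delta> v p))"

definition Qset :: "'a::euclidean_space set \<Rightarrow> (real \<Rightarrow> 'a \<Rightarrow> real) \<Rightarrow> real
                    \<Rightarrow> ('a \<times> 'a \<Rightarrow> real) set" where
  "Qset \<Omega> \<omega> \<delta> = {q. L2on (Omega_d \<Omega> \<delta> \<times> Omega_d \<Omega> \<delta>) q \<and> (\<exists>g. Drel \<Omega> \<omega> \<delta> q g)}"

definition sqrtE :: "ennreal \<Rightarrow> ennreal" where
  "sqrtE e = (if e = top then top else ennreal (sqrt (enn2real e)))"

definition L12norm :: "'a::euclidean_space set \<Rightarrow> ('a \<times> 'a \<Rightarrow> real) \<Rightarrow> ennreal" where
  "L12norm A q = (\<integral>\<^sup>+ x. indicator A x *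
       sqrtE (\<integral>\<^sup>+ x'. indicator A x' * ennreal ((q (x, x'))\<^sup>2) \<partial>lebesgue) \<partial>lebesgue)"

definition L12 :: "'a::euclidean_space set \<Rightarrow> ('a \<times> 'a \<Rightarrow> real) \<Rightarrow> bool" where
  "L12 A q \<longleftrightarrow> set_borel_measurable lebesgue (A \<times> A) q \<and> L12norm A q < top"

text \<open>Qbar_delta(f): q lies in the domain of the closure of D_delta
(as an operator L^{1,2} -> L^2(Omega) with domain Q_delta) and the closure maps
it to f, i.e. (q,f) lies in the closure of the graph of D_delta.\<close>
definition Qbar :: "'a::euclidean_space set \<Rightarrow> (real \<Rightarrow> 'a \<Rightarrow> real) \<Rightarrow> real
                    \<Rightarrow> ('a \<Rightarrow> real) \<Rightarrow> ('a \<times> 'a \<Rightarrow> real) set" where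
  "Qbar \<Omega> \<omega> \<delta> f = {q. L12 (Omega_d \<Omega> \<delta>) q \<and>
     (\<exists>qs gs. (\<forall>k. qs k \<in> Qset \<Omega> \<omega> \<delta> \<and> Drel \<Omega> \<omega> \<delta> (qs k) (gs k)) \<and>
        (\<lambda>k. L12norm (Omega_d \<Omega> \<delta>) (\<lambda>p. qs k p - q p)) \<longlonglongrightarrow> 0 \<and>
        (\<lambda>k. \<integral>\<^sup>+ x. ennreal (indicator \<Omega> x * (gs k x - f x)\<^sup>2) \<partial>lebesgue) \<longlonglongrightarrow> 0)}"

definition Rop :: "'a::euclidean_space set \<Rightarrow> (real \<Rightarrow> 'a \<Rightarrow> real) \<Rightarrow> real
                   \<Rightarrow> ('a \<times> 'a \<Rightarrow> real) \<Rightarrow> 'a \<Rightarrow> 'a" where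
  "Rop \<Omega> \<omega> \<delta> q x = set_lebesgue_integral lebesgue (Omega_d \<Omega> \<delta>)
      (\<lambda>x'. (q (x, x') * \<omega> \<delta> (x - x')) *\<^sub>R (x - x'))"

text \<open>A finite R^n-valued Radon measure on closure Omega, represented (polar
decomposition) as h mu with mu a finite Borel measure concentrated on
closure Omega and h in L^1(mu; R^n).\<close>
definition vec_measure_on :: "'a::euclidean_space set \<Rightarrow> 'a measure \<Rightarrow> ('a \<Rightarrow> 'a) \<Rightarrow> bool" where
  "vec_measure_on K \<mu> h \<longleftrightarrow> sets \<mu> = sets (borel :: 'a measure) \<and> finite_measure \<mu> \<and>
      emeasure \<mu> (- K) = 0 \<and> h \<in> borel_measurable borel \<and> integrable \<mu> h"

end

theory Submission
  imports Defs
begin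

text \<open>Fix a test function \<phi> with extension by zero \<Phi>. The duality identity defining the
  nonlocal divergence survives the closure of its graph, so
  \<open>\<integral> f \<phi> = - \<integral>\<integral> q(x,x') (\<Phi> x - \<Phi> x') \<omega>\<^sub>\<delta>(x - x')\<close> for every q in Qbar_\<delta>(f).
  Uniformly in x, \<open>\<Phi> x - \<Phi> x' = \<nabla>\<phi>(x) \<bullet> (x - x') + o(|x - x'|)\<close>; by Fubini the main
  term pairs with q to \<open>\<integral> \<nabla>\<phi> \<bullet> R\<^sub>\<delta> q\<close>. The remainder is dominated by \<open>o(1) |x - x'| \<omega>\<^sub>\<delta>(x - x')\<close>,
  and as \<open>|z| \<omega>\<^sub>\<delta>(z)\<close> has the fixed L^2 norm K_{2,n}^{-1/2}, Cauchy-Schwarz in x' bounds its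
  pairing with q by \<open>o(1)\<close> times the L^{1,2} norm of q. With the uniform L^{1,2} bound this gives
  \<open>\<integral> \<nabla>\<phi> \<bullet> R\<^sub>\<delta>\<^sub>k q\<^sub>k \<rightarrow> - \<integral> f \<phi>\<close>, and weak convergence identifies the limit.\<close>

section \<open>Cauchy-Schwarz with the extended square root\<close>

lemma sqrtE_mono: "a \<le> b \<Longrightarrow> sqrtE a \<le> sqrtE b"
  unfolding sqrtE_def
  by (cases a; cases b) (auto simp: ennreal_le_iff top_unique)

lemma sqrtE_0 [simp]: "sqrtE 0 = 0"
  by (simp add: sqrtE_def)

lemma sqrtE_power2 [simp]: "c \<ge> 0 \<Longrightarrow> sqrtE (ennreal (c\<^sup>2)) = ennreal c"
  by (simp add: sqrtE_def)

lemma le_sqrtE_mult: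
  fixes u v w :: ennreal
  assumes "u\<^sup>2 \<le> v * w"
  shows "u \<le> sqrtE v * sqrtE w"
proof -
  consider "v = 0 \<or> w = 0" | "v = top" "w \<noteq> 0" | "w = top" "v \<noteq> 0"
    | "v \<noteq> 0" "w \<noteq> 0" "v \<noteq> top" "w \<noteq> top"
    by blast
  then show ?thesis
  proof cases
    case 1
    then have "u\<^sup>2 = 0" using assms by auto
    then show ?thesis by simp
  next
    case 2
    have "sqrtE w \<noteq> 0" using 2 unfolding sqrtE_def
      by (cases w) (auto simp: ennreal_eq_0_iff)
    then have "sqrtE v * sqrtE w = top" using 2 by (simp add: sqrtE_def ennreal_mult_eq_top_iff)
    then show ?thesis by simp
  next
    case 3
    have "sqrtE v \<noteq> 0" using 3 unfolding sqrtE_def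
      by (cases v) (auto simp: ennreal_eq_0_iff)
    then have "sqrtE v * sqrtE w = top" using 3 by (simp add: sqrtE_def ennreal_mult_eq_top_iff)
    then show ?thesis by simp
  next
    case 4
    obtain a where a: "v = ennreal a" "a \<ge> 0" using 4 by (cases v) auto
    obtain b where b: "w = ennreal b" "b \<ge> 0" using 4 by (cases w) auto
    have "u\<^sup>2 < top" using assms a b by (metis ennreal_mult ennreal_less_top order_le_less_trans)
    then have "u < top" by (cases "u = top") (auto simp: power2_eq_square top.not_eq_extremum)
    then obtain c where c: "u = ennreal c" "c \<ge> 0" by (cases u) auto
    have "ennreal (c\<^sup>2) \<le> ennreal (a * b)" using assms a b c by (simp add: ennreal_power ennreal_mult)
    then have "c\<^sup>2 \<le> a * b" using a b by (simp add: ennreal_le_iff)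
    then have "c \<le> sqrt (a * b)" using c by (simp add: real_le_rsqrt)
    then have "c \<le> sqrt a * sqrt b" by (simp add: real_sqrt_mult)
    then show ?thesis using a b c by (simp add: sqrtE_def ennreal_mult[symmetric])
  qed
qed

lemma nn_integral_abs_mult_le_sqrtE:
  fixes f g :: "'b \<Rightarrow> real"
  assumes [measurable]: "f \<in> borel_measurable M" "g \<in> borel_measurable M"
  shows "(\<integral>\<^sup>+x. ennreal \<bar>f x * g x\<bar> \<partial>M)
      \<le> sqrtE (\<integral>\<^sup>+x. ennreal ((f x)\<^sup>2) \<partial>M) * sqrtE (\<integral>\<^sup>+x. ennreal ((g x)\<^sup>2) \<partial>M)"
proof -
  have "(\<integral>\<^sup>+x. ennreal \<bar>f x\<bar> * ennreal \<bar>g x\<bar> \<partial>M)\<^sup>2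
      \<le> (\<integral>\<^sup>+x. ennreal \<bar>f x\<bar> ^ 2 \<partial>M) * (\<integral>\<^sup>+x. ennreal \<bar>g x\<bar> ^ 2 \<partial>M)"
    by (rule Cauchy_Schwarz_nn_integral) auto
  moreover have "ennreal \<bar>f x\<bar> * ennreal \<bar>g x\<bar> = ennreal \<bar>f x * g x\<bar>" for x
    by (simp add: ennreal_mult abs_mult)
  moreover have "ennreal \<bar>u\<bar> ^ 2 = ennreal (u\<^sup>2)" for u :: real
    by (simp add: ennreal_power)
  ultimately show ?thesis by (intro le_sqrtE_mult) simp
qed

lemma tendsto_sqrtE_zero:
  assumes e: "e \<longlonglongrightarrow> 0"
  shows "(\<lambda>j. sqrtE (e j)) \<longlonglongrightarrow> 0"
proof -
  have "(\<lambda>j. enn2real (e j)) \<longlonglongrightarrow> 0"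
    using tendsto_enn2real[of e 0] e by simp
  then have "(\<lambda>j. sqrt (enn2real (e j))) \<longlonglongrightarrow> 0"
    using tendsto_real_sqrt by fastforce
  then have "(\<lambda>j. ennreal (sqrt (enn2real (e j)))) \<longlonglongrightarrow> 0"
    using tendsto_ennrealI by fastforce
  moreover have "eventually (\<lambda>j. ennreal (sqrt (enn2real (e j))) = sqrtE (e j)) sequentially"
  proof -
    have "eventually (\<lambda>j. e j < 1) sequentially" using e by (rule order_tendstoD) simp
    then show ?thesis by eventually_elim (auto simp: sqrtE_def)
  qed
  ultimately show ?thesis by (rule Lim_transform_eventually)
qed

lemma LIMSEQ_zero_if_ennreal_abs_le:
  fixes x :: "nat \<Rightarrow> real"
  assumes le: "\<And>j. ennreal \<bar>x j\<bar> \<le> y j" and y: "y \<longlonglongrightarrow> 0"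
  shows "x \<longlonglongrightarrow> 0"
proof -
  have "(\<lambda>j. ennreal \<bar>x j\<bar>) \<longlonglongrightarrow> 0"
    by (rule tendsto_sandwich[OF _ _ tendsto_const y]) (use le in auto)
  then have "(\<lambda>j. \<bar>x j\<bar>) \<longlonglongrightarrow> 0"
    using tendsto_enn2real[of "\<lambda>j. ennreal \<bar>x j\<bar>" 0] by simp
  then show ?thesis by (simp add: tendsto_rabs_zero_iff)
qed

lemma LIMSEQ_if_eventually_abs_diff_le_mult:
  fixes X :: "nat \<Rightarrow> real"
  assumes "\<And>e. e > 0 \<Longrightarrow> eventually (\<lambda>k. \<bar>X k - L\<bar> \<le> e * c) sequentially"
  shows "X \<longlonglongrightarrow> L"
proof (rule LIMSEQ_I)
  fix r :: real assume r: "r > 0"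
  define e where "e = r / (\<bar>c\<bar> + 1)"
  have e: "e > 0" using r by (simp add: e_def)
  have "e * c \<le> e * \<bar>c\<bar>" using e by (simp add: mult_left_mono)
  also have "\<dots> < e * (\<bar>c\<bar> + 1)" using e by simp
  also have "\<dots> = r" by (simp add: e_def)
  finally have "e * c < r" .
  obtain N where "\<forall>k\<ge>N. \<bar>X k - L\<bar> \<le> e * c"
    using assms[OF e] unfolding eventually_sequentially by blast
  with \<open>e * c < r\<close> show "\<exists>N. \<forall>k\<ge>N. norm (X k - L) < r"
    by (intro exI[of _ N]) auto
qed

section \<open>Convergence of L^2 pairings\<close>

lemma set_integrable_mult_if_L2on:
  fixes S :: "'b::euclidean_space set"
  assumes u: "L2on S u" and v: "L2on S v"
  shows "set_integrable lebesgue S (\<lambda>x. u x * v x)"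
proof -
  have mu: "(\<lambda>x. indicator S x *\<^sub>R u x) \<in> borel_measurable lebesgue"
   and iu: "integrable lebesgue (\<lambda>x. indicator S x *\<^sub>R (u x)\<^sup>2)"
    using u unfolding L2on_def set_borel_measurable_def set_integrable_def by auto
  have mv: "(\<lambda>x. indicator S x *\<^sub>R v x) \<in> borel_measurable lebesgue"
   and iv: "integrable lebesgue (\<lambda>x. indicator S x *\<^sub>R (v x)\<^sup>2)"
    using v unfolding L2on_def set_borel_measurable_def set_integrable_def by auto
  have eq: "(\<lambda>x. indicator S x *\<^sub>R (u x * v x)) = (\<lambda>x. (indicator S x *\<^sub>R u x) * (indicator S x *\<^sub>R v x))"
    by (auto simp: indicator_def)
  have le: "\<bar>a * b\<bar> \<le> a\<^sup>2 + b\<^sup>2" for a b :: real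
  proof -
    have "2 * (\<bar>a\<bar> * \<bar>b\<bar>) \<le> a\<^sup>2 + b\<^sup>2"
      using sum_squares_bound[of "\<bar>a\<bar>" "\<bar>b\<bar>"] by (simp add: mult.assoc)
    moreover have "0 \<le> \<bar>a\<bar> * \<bar>b\<bar>" by simp
    ultimately show ?thesis unfolding abs_mult by linarith
  qed
  show ?thesis unfolding set_integrable_def
  proof (rule Bochner_Integration.integrable_bound)
    show "integrable lebesgue (\<lambda>x. indicator S x *\<^sub>R (u x)\<^sup>2 + indicator S x *\<^sub>R (v x)\<^sup>2)"
      using iu iv by (rule Bochner_Integration.integrable_add)
    show "(\<lambda>x. indicator S x *\<^sub>R (u x * v x)) \<in> borel_measurable lebesgue"
      unfolding eq using mu mv by (rule borel_measurable_times)
    show "AE x in lebesgue. norm (indicator S x *\<^sub>R (u x * v x))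
        \<le> norm (indicator S x *\<^sub>R (u x)\<^sup>2 + indicator S x *\<^sub>R (v x)\<^sup>2)"
      using le by (intro AE_I2) (auto simp: indicator_def)
  qed
qed

lemma abs_set_integral_mult_le_sqrtE:
  fixes u v :: "'b::euclidean_space \<Rightarrow> real"
  assumes int: "set_integrable lebesgue S (\<lambda>x. u x * v x)"
    and u: "set_borel_measurable lebesgue S u" and v: "set_borel_measurable lebesgue S v"
  shows "ennreal \<bar>set_lebesgue_integral lebesgue S (\<lambda>x. u x * v x)\<bar>
      \<le> sqrtE (\<integral>\<^sup>+x. ennreal (indicator S x * (u x)\<^sup>2) \<partial>lebesgue)
       * sqrtE (\<integral>\<^sup>+x. ennreal (indicator S x * (v x)\<^sup>2) \<partial>lebesgue)"
proof -
  have sq: "(indicator S x * w x)\<^sup>2 = indicator S x * (w x)\<^sup>2" for w :: "'b \<Rightarrow> real" and x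
    by (simp add: indicator_def)
  have "ennreal \<bar>set_lebesgue_integral lebesgue S (\<lambda>x. u x * v x)\<bar>
      \<le> (\<integral>\<^sup>+x. ennreal (norm (indicator S x *\<^sub>R (u x * v x))) \<partial>lebesgue)"
    using integral_norm_bound_ennreal int
    unfolding set_lebesgue_integral_def set_integrable_def by fastforce
  also have "\<dots> = (\<integral>\<^sup>+x. ennreal \<bar>(indicator S x * u x) * (indicator S x * v x)\<bar> \<partial>lebesgue)"
    by (rule nn_integral_cong) (simp add: indicator_def)
  also have "\<dots> \<le> sqrtE (\<integral>\<^sup>+x. ennreal ((indicator S x * u x)\<^sup>2) \<partial>lebesgue)
      * sqrtE (\<integral>\<^sup>+x. ennreal ((indicator S x * v x)\<^sup>2) \<partial>lebesgue)"
    using u v unfolding set_borel_measurable_def by (intro nn_integral_abs_mult_le_sqrtE) simp_all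
  finally show ?thesis by (simp only: sq)
qed

lemma set_integral_tendsto_if_L2_tendsto:
  fixes S :: "'b::euclidean_space set"
  assumes f: "L2on S f" and g: "\<And>k. L2on S (g k)" and v: "L2on S v"
    and lim: "(\<lambda>k. \<integral>\<^sup>+x. ennreal (indicator S x * (g k x - f x)\<^sup>2) \<partial>lebesgue) \<longlonglongrightarrow> 0"
  shows "(\<lambda>k. set_lebesgue_integral lebesgue S (\<lambda>x. g k x * v x))
           \<longlonglongrightarrow> set_lebesgue_integral lebesgue S (\<lambda>x. f x * v x)"
proof -
  define V where "V = sqrtE (\<integral>\<^sup>+x. ennreal (indicator S x * (v x)\<^sup>2) \<partial>lebesgue)"
  have "integrable lebesgue (\<lambda>x. indicator S x *\<^sub>R (v x)\<^sup>2)"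
    using v unfolding L2on_def set_integrable_def by blast
  then have "V < top" by (simp add: V_def integrable_iff_bounded sqrtE_def less_top)
  have intf: "set_integrable lebesgue S (\<lambda>x. f x * v x)"
    by (rule set_integrable_mult_if_L2on[OF f v])
  have intg: "set_integrable lebesgue S (\<lambda>x. g k x * v x)" for k
    by (rule set_integrable_mult_if_L2on[OF g v])
  have "(\<lambda>k. set_lebesgue_integral lebesgue S (\<lambda>x. g k x * v x)
      - set_lebesgue_integral lebesgue S (\<lambda>x. f x * v x)) \<longlonglongrightarrow> 0"
  proof (rule LIMSEQ_zero_if_ennreal_abs_le)
    fix k
    have "set_lebesgue_integral lebesgue S (\<lambda>x. g k x * v x)
        - set_lebesgue_integral lebesgue S (\<lambda>x. f x * v x)
      = set_lebesgue_integral lebesgue S (\<lambda>x. (g k x - f x) * v x)"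
      using set_integral_diff(2)[OF intg intf] by (simp add: left_diff_distrib)
    moreover have "set_integrable lebesgue S (\<lambda>x. (g k x - f x) * v x)"
      using set_integral_diff(1)[OF intg intf] by (simp add: left_diff_distrib)
    moreover have "set_borel_measurable lebesgue S (\<lambda>x. g k x - f x)"
      using f g[of k] unfolding L2on_def set_borel_measurable_def
      by (simp add: right_diff_distrib borel_measurable_diff)
    ultimately show "ennreal \<bar>set_lebesgue_integral lebesgue S (\<lambda>x. g k x * v x)
        - set_lebesgue_integral lebesgue S (\<lambda>x. f x * v x)\<bar>
      \<le> sqrtE (\<integral>\<^sup>+x. ennreal (indicator S x * (g k x - f x)\<^sup>2) \<partial>lebesgue) * V"
      using v unfolding V_def L2on_def by (simp add: abs_set_integral_mult_le_sqrtE)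
  next
    show "(\<lambda>k. sqrtE (\<integral>\<^sup>+x. ennreal (indicator S x * (g k x - f x)\<^sup>2) \<partial>lebesgue) * V) \<longlonglongrightarrow> 0"
      using ennreal_tendsto_cmult[OF \<open>V < top\<close> tendsto_sqrtE_zero[OF lim]] by (simp add: mult.commute)
  qed
  then show ?thesis by (simp add: LIM_zero_iff)
qed

section \<open>Pairings with L^{1,2} kernels\<close>

lemma borel_measurable_fst [measurable]:
  "(fst :: 'a::euclidean_space \<times> 'b::euclidean_space \<Rightarrow> 'a) \<in> borel_measurable borel"
  by (intro borel_measurable_continuous_onI continuous_intros)

lemma borel_measurable_snd [measurable]:
  "(snd :: 'a::euclidean_space \<times> 'b::euclidean_space \<Rightarrow> 'b) \<in> borel_measurable borel"
  by (intro borel_measurable_continuous_onI continuous_intros)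

lemma borel_measurable_completion_AE_cong:
  fixes f g :: "'b \<Rightarrow> 'c::topological_space"
  assumes g: "g \<in> borel_measurable (completion M)" and ae: "AE x in completion M. f x = g x"
  shows "f \<in> borel_measurable (completion M)"
proof (rule measurableI)
  fix x assume "x \<in> space (completion M)" then show "f x \<in> space borel" by simp
next
  fix A :: "'c set" assume A: "A \<in> sets borel"
  have gA: "g -` A \<inter> space (completion M) \<in> sets (completion M)"
    using g A by (rule measurable_sets)
  show "f -` A \<inter> space (completion M) \<in> sets (completion M)"
  proof (rule completion.in_sets_AE[OF _ gA])
    show "AE x in completion M. (x \<in> g -` A \<inter> space (completion M)) = (x \<in> f -` A \<inter> space (completion M))"
      using ae by eventually_elim auto
  qed auto
qed

lemma integral_completion_AE_cong:
  fixes f g :: "'b \<Rightarrow> 'c::{banach, second_countable_topology}"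
  assumes g: "g \<in> borel_measurable M" and ae: "AE x in M. f x = g x"
  shows "integral\<^sup>L (completion M) f = integral\<^sup>L M g"
proof -
  have gc: "g \<in> borel_measurable (completion M)" using g by (rule measurable_completion)
  have aec: "AE x in completion M. f x = g x" using ae by (rule AE_completion)
  have "f \<in> borel_measurable (completion M)" by (rule borel_measurable_completion_AE_cong[OF gc aec])
  then have "integral\<^sup>L (completion M) f = integral\<^sup>L (completion M) g"
    by (rule integral_cong_AE[OF _ gc aec])
  also have "\<dots> = integral\<^sup>L M g" by (rule integral_completion[OF g])
  finally show ?thesis .
qed

lemma borel_measurable_lebesgueI:
  "W \<in> borel_measurable borel \<Longrightarrow> W \<in> borel_measurable (lebesgue :: 'a::euclidean_space measure)"
  by (rule measurable_completion) simp

text \<open>Tonelli and Fubini are available for \<open>lborel\<close> only, so a Lebesgue measurable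
  q is replaced by a Borel representative with the same L^{1,2} norm.\<close>

lemma L12norm_borel_representative:
  fixes a :: "'a::euclidean_space \<times> 'a \<Rightarrow> real" and D :: "'a set"
  assumes "set_borel_measurable lebesgue (D \<times> D) a"
  obtains A where "A \<in> borel_measurable borel"
    "AE p in (lborel::('a\<times>'a) measure). indicator (D\<times>D) p * a p = A p"
    "AE x in lborel. AE y in lborel. indicator (D\<times>D) (x,y) * a (x,y) = A (x,y)"
    "L12norm D a = (\<integral>\<^sup>+x. sqrtE (\<integral>\<^sup>+y. ennreal ((A (x,y))\<^sup>2) \<partial>lborel) \<partial>lborel)"
proof -
  have "(\<lambda>p. indicator (D\<times>D) p * a p) \<in> borel_measurable (completion lborel)"
    using assms by (simp add: set_borel_measurable_def)
  from completion_ex_borel_measurable_real[OF this]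
  obtain A where A: "A \<in> borel_measurable lborel"
     "AE p in (lborel::('a\<times>'a) measure). indicator (D\<times>D) p * a p = A p" by blast
  have Ab: "A \<in> borel_measurable borel" using A by simp
  have "AE p in (lborel \<Otimes>\<^sub>M lborel :: ('a\<times>'a) measure). indicator (D\<times>D) p * a p = A p"
    unfolding lborel_prod by (rule A(2))
  from lborel_pair.AE_pair[OF this]
  have AE2: "AE x in lborel. AE y in lborel. indicator (D\<times>D) (x,y) * a (x,y) = A (x,y)" by simp
  have "L12norm D a = (\<integral>\<^sup>+x. sqrtE (\<integral>\<^sup>+y. ennreal ((A (x,y))\<^sup>2) \<partial>lborel) \<partial>lebesgue)"
    unfolding L12norm_def
  proof (rule nn_integral_cong_AE)
    show "AE x in lebesgue. indicator D x * sqrtE (\<integral>\<^sup>+ x'. indicator D x' * ennreal ((a (x, x'))\<^sup>2) \<partial>lebesgue) =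
         sqrtE (\<integral>\<^sup>+y. ennreal ((A (x,y))\<^sup>2) \<partial>lborel)"
    proof (rule AE_completion, use AE2 in eventually_elim)
      case (elim x)
      have "(\<integral>\<^sup>+y. ennreal ((A (x,y))\<^sup>2) \<partial>lborel) = (\<integral>\<^sup>+y. ennreal ((A (x,y))\<^sup>2) \<partial>lebesgue)"
        by (simp add: nn_integral_completion)
      also have "\<dots> = (\<integral>\<^sup>+y. ennreal ((indicator (D\<times>D) (x,y) * a (x,y))\<^sup>2) \<partial>lebesgue)"
        by (rule nn_integral_cong_AE, rule AE_completion, use elim in eventually_elim) simp
      also have "\<dots> = indicator D x * (\<integral>\<^sup>+ x'. indicator D x' * ennreal ((a (x, x'))\<^sup>2) \<partial>lebesgue)"
        by (cases "x \<in> D") (auto simp: indicator_def intro!: nn_integral_cong)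
      finally show ?case by (cases "x \<in> D") auto
    qed
  qed
  also have "\<dots> = (\<integral>\<^sup>+x. sqrtE (\<integral>\<^sup>+y. ennreal ((A (x,y))\<^sup>2) \<partial>lborel) \<partial>lborel)"
    by (simp add: nn_integral_completion)
  finally show ?thesis using that Ab A(2) AE2 by blast
qed

lemma nn_integral_abs_mult_le_mixed_norm:
  fixes A W :: "'a::euclidean_space \<times> 'a \<Rightarrow> real"
  assumes [measurable]: "A \<in> borel_measurable borel" "W \<in> borel_measurable borel"
    and B: "B \<ge> 0" "\<And>x. (\<integral>\<^sup>+y. ennreal ((W (x,y))\<^sup>2) \<partial>lborel) \<le> ennreal (B\<^sup>2)"
  shows "(\<integral>\<^sup>+p. ennreal \<bar>A p * W p\<bar> \<partial>lborel) \<le> ennreal B * (\<integral>\<^sup>+x. sqrtE (\<integral>\<^sup>+y. ennreal ((A (x,y))\<^sup>2) \<partial>lborel) \<partial>lborel)"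
proof -
  have "(\<integral>\<^sup>+p. ennreal \<bar>A p * W p\<bar> \<partial>lborel) = (\<integral>\<^sup>+p. ennreal \<bar>A p * W p\<bar> \<partial>(lborel \<Otimes>\<^sub>M lborel))"
    by (simp add: lborel_prod)
  also have "\<dots> = (\<integral>\<^sup>+x. \<integral>\<^sup>+y. ennreal \<bar>A (x,y) * W (x,y)\<bar> \<partial>lborel \<partial>lborel)"
    by (rule lborel.nn_integral_fst[symmetric]) (unfold lborel_prod, simp)
  also have "\<dots> \<le> (\<integral>\<^sup>+x. sqrtE (\<integral>\<^sup>+y. ennreal ((A (x,y))\<^sup>2) \<partial>lborel) * ennreal B \<partial>lborel)"
  proof (rule nn_integral_mono)
    fix x
    have "(\<integral>\<^sup>+y. ennreal \<bar>A (x,y) * W (x,y)\<bar> \<partial>lborel) \<le> sqrtE (\<integral>\<^sup>+y. ennreal ((A (x,y))\<^sup>2) \<partial>lborel) * sqrtE (\<integral>\<^sup>+y. ennreal ((W (x,y))\<^sup>2) \<partial>lborel)"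
      by (rule nn_integral_abs_mult_le_sqrtE) auto
    also have "\<dots> \<le> sqrtE (\<integral>\<^sup>+y. ennreal ((A (x,y))\<^sup>2) \<partial>lborel) * ennreal B"
      by (intro mult_left_mono) (use sqrtE_mono[OF B(2)[of x]] B(1) in auto)
    finally show "(\<integral>\<^sup>+y. ennreal \<bar>A (x,y) * W (x,y)\<bar> \<partial>lborel) \<le> sqrtE (\<integral>\<^sup>+y. ennreal ((A (x,y))\<^sup>2) \<partial>lborel) * ennreal B" .
  qed
  also have "\<dots> = ennreal B * (\<integral>\<^sup>+x. sqrtE (\<integral>\<^sup>+y. ennreal ((A (x,y))\<^sup>2) \<partial>lborel) \<partial>lborel)"
    by (subst nn_integral_multc) (auto simp: mult.commute sqrtE_def)
  finally show ?thesis .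
qed

lemma nn_integral_L12_pairing_le:
  fixes a W :: "'a::euclidean_space \<times> 'a \<Rightarrow> real" and D :: "'a set"
  assumes a: "set_borel_measurable lebesgue (D\<times>D) a" and Wm[measurable]: "W \<in> borel_measurable borel"
    and B: "B \<ge> 0" "\<And>x. (\<integral>\<^sup>+y. ennreal ((W (x,y))\<^sup>2) \<partial>lborel) \<le> ennreal (B\<^sup>2)"
  shows "(\<integral>\<^sup>+p. ennreal \<bar>indicator (D\<times>D) p * a p * W p\<bar> \<partial>lebesgue) \<le> ennreal B * L12norm D a"
proof -
  obtain A where A[measurable]: "A \<in> borel_measurable borel"
    and AE1: "AE p in (lborel::('a\<times>'a) measure). indicator (D\<times>D) p * a p = A p"
    and L: "L12norm D a = (\<integral>\<^sup>+x. sqrtE (\<integral>\<^sup>+y. ennreal ((A (x,y))\<^sup>2) \<partial>lborel) \<partial>lborel)"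
    using L12norm_borel_representative[OF a] by blast
  have "(\<integral>\<^sup>+p. ennreal \<bar>indicator (D\<times>D) p * a p * W p\<bar> \<partial>lebesgue) = (\<integral>\<^sup>+p. ennreal \<bar>A p * W p\<bar> \<partial>lebesgue)"
    by (rule nn_integral_cong_AE, rule AE_completion, use AE1 in eventually_elim) simp
  also have "\<dots> = (\<integral>\<^sup>+p. ennreal \<bar>A p * W p\<bar> \<partial>lborel)"
    by (simp add: nn_integral_completion)
  also have "\<dots> \<le> ennreal B * L12norm D a"
    unfolding L by (rule nn_integral_abs_mult_le_mixed_norm[OF A Wm B])
  finally show ?thesis .
qed

lemma set_integrable_L12_pairing:
  fixes a W :: "'a::euclidean_space \<times> 'a \<Rightarrow> real" and D :: "'a set"
  assumes a: "set_borel_measurable lebesgue (D\<times>D) a" and Wm[measurable]: "W \<in> borel_measurable borel"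
    and B: "B \<ge> 0" "\<And>x. (\<integral>\<^sup>+y. ennreal ((W (x,y))\<^sup>2) \<partial>lborel) \<le> ennreal (B\<^sup>2)"
    and fin: "L12norm D a < top"
  shows "set_integrable lebesgue (D\<times>D) (\<lambda>p. a p * W p)"
  unfolding set_integrable_def
proof (rule integrableI_bounded)
  have "(\<lambda>p. indicator (D\<times>D) p * a p) \<in> borel_measurable lebesgue"
    using a by (simp add: set_borel_measurable_def)
  moreover have "W \<in> borel_measurable lebesgue" by (rule borel_measurable_lebesgueI) simp
  ultimately show "(\<lambda>p. indicator (D\<times>D) p *\<^sub>R (a p * W p)) \<in> borel_measurable lebesgue"
    by (simp add: mult.assoc[symmetric])
  have "(\<integral>\<^sup>+p. ennreal \<bar>indicator (D\<times>D) p * a p * W p\<bar> \<partial>lebesgue) \<le> ennreal B * L12norm D a"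
    by (rule nn_integral_L12_pairing_le[OF a Wm B])
  also have "\<dots> < top" using fin by (simp add: ennreal_mult_less_top)
  finally show "(\<integral>\<^sup>+p. ennreal (norm (indicator (D\<times>D) p *\<^sub>R (a p * W p))) \<partial>lebesgue) < \<infinity>"
    by (simp add: mult.assoc)
qed

lemma abs_set_integral_L12_pairing_le:
  fixes a W :: "'a::euclidean_space \<times> 'a \<Rightarrow> real" and D :: "'a set"
  assumes a: "set_borel_measurable lebesgue (D\<times>D) a" and Wm[measurable]: "W \<in> borel_measurable borel"
    and B: "B \<ge> 0" "\<And>x. (\<integral>\<^sup>+y. ennreal ((W (x,y))\<^sup>2) \<partial>lborel) \<le> ennreal (B\<^sup>2)"
    and int_aW: "set_integrable lebesgue (D\<times>D) (\<lambda>p. a p * W p)"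
  shows "ennreal \<bar>set_lebesgue_integral lebesgue (D\<times>D) (\<lambda>p. a p * W p)\<bar> \<le> ennreal B * L12norm D a"
proof -
  have int: "integrable lebesgue (\<lambda>p. indicator (D\<times>D) p *\<^sub>R (a p * W p))"
    using int_aW by (simp add: set_integrable_def)
  have "ennreal \<bar>set_lebesgue_integral lebesgue (D\<times>D) (\<lambda>p. a p * W p)\<bar>
     \<le> (\<integral>\<^sup>+p. ennreal (norm (indicator (D\<times>D) p *\<^sub>R (a p * W p))) \<partial>lebesgue)"
    unfolding set_lebesgue_integral_def using integral_norm_bound_ennreal[OF int] by simp
  also have "\<dots> = (\<integral>\<^sup>+p. ennreal \<bar>indicator (D\<times>D) p * a p * W p\<bar> \<partial>lebesgue)"
    by (simp add: mult.assoc)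
  also have "\<dots> \<le> ennreal B * L12norm D a"
    by (rule nn_integral_L12_pairing_le[OF a Wm B])
  finally show ?thesis .
qed

lemma set_integral_tendsto_if_L12norm_tendsto:
  fixes q W :: "'a::euclidean_space \<times> 'a \<Rightarrow> real" and qs :: "nat \<Rightarrow> 'a \<times> 'a \<Rightarrow> real"
  assumes q: "set_borel_measurable lebesgue (D\<times>D) q" "L12norm D q < top"
    and qs: "\<And>k. set_borel_measurable lebesgue (D\<times>D) (qs k)"
      "\<And>k. set_integrable lebesgue (D\<times>D) (\<lambda>p. qs k p * W p)"
    and Wm[measurable]: "W \<in> borel_measurable borel"
    and B: "B \<ge> 0" "\<And>x. (\<integral>\<^sup>+y. ennreal ((W (x,y))\<^sup>2) \<partial>lborel) \<le> ennreal (B\<^sup>2)"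
    and lim: "(\<lambda>k. L12norm D (\<lambda>p. qs k p - q p)) \<longlonglongrightarrow> 0"
  shows "(\<lambda>k. set_lebesgue_integral lebesgue (D\<times>D) (\<lambda>p. qs k p * W p))
           \<longlonglongrightarrow> set_lebesgue_integral lebesgue (D\<times>D) (\<lambda>p. q p * W p)"
proof -
  have intq: "set_integrable lebesgue (D\<times>D) (\<lambda>p. q p * W p)"
    by (rule set_integrable_L12_pairing[OF q(1) Wm B q(2)])
  have "(\<lambda>k. set_lebesgue_integral lebesgue (D\<times>D) (\<lambda>p. qs k p * W p)
      - set_lebesgue_integral lebesgue (D\<times>D) (\<lambda>p. q p * W p)) \<longlonglongrightarrow> 0"
  proof (rule LIMSEQ_zero_if_ennreal_abs_le)
    fix k
    have "set_lebesgue_integral lebesgue (D\<times>D) (\<lambda>p. qs k p * W p)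
        - set_lebesgue_integral lebesgue (D\<times>D) (\<lambda>p. q p * W p)
      = set_lebesgue_integral lebesgue (D\<times>D) (\<lambda>p. qs k p * W p - q p * W p)"
      by (rule set_integral_diff(2)[OF qs(2) intq, symmetric])
    also have "\<dots> = set_lebesgue_integral lebesgue (D\<times>D) (\<lambda>p. (qs k p - q p) * W p)"
      by (simp add: left_diff_distrib)
    finally have eq: "set_lebesgue_integral lebesgue (D\<times>D) (\<lambda>p. qs k p * W p)
        - set_lebesgue_integral lebesgue (D\<times>D) (\<lambda>p. q p * W p)
      = set_lebesgue_integral lebesgue (D\<times>D) (\<lambda>p. (qs k p - q p) * W p)" .
    have "set_integrable lebesgue (D\<times>D) (\<lambda>p. (qs k p - q p) * W p)"
      using set_integral_diff(1)[OF qs(2) intq] by (simp add: left_diff_distrib)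
    moreover have "set_borel_measurable lebesgue (D\<times>D) (\<lambda>p. qs k p - q p)"
      using qs(1)[of k] q(1) unfolding set_borel_measurable_def
      by (simp add: right_diff_distrib borel_measurable_diff)
    ultimately show "ennreal \<bar>set_lebesgue_integral lebesgue (D\<times>D) (\<lambda>p. qs k p * W p)
        - set_lebesgue_integral lebesgue (D\<times>D) (\<lambda>p. q p * W p)\<bar>
      \<le> ennreal B * L12norm D (\<lambda>p. qs k p - q p)"
      unfolding eq using abs_set_integral_L12_pairing_le[OF _ Wm B] by blast
  next
    show "(\<lambda>k. ennreal B * L12norm D (\<lambda>p. qs k p - q p)) \<longlonglongrightarrow> 0"
      using ennreal_tendsto_cmult[OF _ lim, of "ennreal B"] by simp
  qed
  then show ?thesis by (simp add: LIM_zero_iff)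
qed

lemma integrable_inner_bounded:
  fixes F \<psi> :: "'b \<Rightarrow> 'a::euclidean_space"
  assumes F: "integrable M F" and \<psi>: "\<psi> \<in> borel_measurable M" and C: "\<And>x. norm (\<psi> x) \<le> C"
  shows "integrable M (\<lambda>x. \<psi> x \<bullet> F x)"
proof (rule Bochner_Integration.integrable_bound)
  show "integrable M (\<lambda>x. C *\<^sub>R F x)" using F by simp
  show "(\<lambda>x. \<psi> x \<bullet> F x) \<in> borel_measurable M"
    using \<psi> borel_measurable_integrable[OF F] by (rule borel_measurable_inner)
  have "norm (\<psi> x \<bullet> F x) \<le> norm (C *\<^sub>R F x)" for x
  proof -
    have "norm (\<psi> x \<bullet> F x) \<le> norm (\<psi> x) * norm (F x)"
      unfolding real_norm_def by (rule Cauchy_Schwarz_ineq2)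
    also have "\<dots> \<le> \<bar>C\<bar> * norm (F x)" using C[of x] by (intro mult_right_mono) auto
    finally show ?thesis by simp
  qed
  then show "AE x in M. norm (\<psi> x \<bullet> F x) \<le> norm (C *\<^sub>R F x)" by simp
qed

lemma integrable_representative_first_moment:
  fixes A :: "'a::euclidean_space \<times> 'a \<Rightarrow> real" and w :: "'a \<Rightarrow> real"
  assumes [measurable]: "A \<in> borel_measurable borel" "w \<in> borel_measurable borel"
    and B: "B \<ge> 0" "\<And>x. (\<integral>\<^sup>+y. ennreal ((norm (x - y) * w (x - y))\<^sup>2) \<partial>lborel) \<le> ennreal (B\<^sup>2)"
    and fin: "(\<integral>\<^sup>+x. sqrtE (\<integral>\<^sup>+y. ennreal ((A (x,y))\<^sup>2) \<partial>lborel) \<partial>lborel) < top"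
  shows "integrable lborel (\<lambda>p. A p *\<^sub>R (w (fst p - snd p) *\<^sub>R (fst p - snd p)))"
proof (rule integrableI_bounded)
  define W where "W p = norm (fst p - snd p) * w (fst p - snd p)" for p :: "'a \<times> 'a"
  have "(\<integral>\<^sup>+p. ennreal (norm (A p *\<^sub>R (w (fst p - snd p) *\<^sub>R (fst p - snd p)))) \<partial>lborel)
      = (\<integral>\<^sup>+p. ennreal \<bar>A p * W p\<bar> \<partial>lborel)"
    by (simp add: W_def abs_mult mult_ac)
  also have "\<dots> \<le> ennreal B * (\<integral>\<^sup>+x. sqrtE (\<integral>\<^sup>+y. ennreal ((A (x,y))\<^sup>2) \<partial>lborel) \<partial>lborel)"
    by (rule nn_integral_abs_mult_le_mixed_norm) (use B in \<open>simp_all add: W_def\<close>)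
  also have "\<dots> < top" using fin by (simp add: ennreal_mult_less_top)
  finally show "(\<integral>\<^sup>+p. ennreal (norm (A p *\<^sub>R (w (fst p - snd p) *\<^sub>R (fst p - snd p)))) \<partial>lborel) < \<infinity>"
    by simp
qed simp

lemma set_integral_slice_representative:
  fixes q A :: "'a::euclidean_space \<times> 'a \<Rightarrow> real" and w :: "'a \<Rightarrow> real"
  assumes AE: "AE y in lborel. indicator (D\<times>D) (x,y) * q (x,y) = A (x,y)" and x: "x \<in> D"
    and [measurable]: "A \<in> borel_measurable borel" "w \<in> borel_measurable borel"
  shows "set_lebesgue_integral lebesgue D (\<lambda>y. (q (x,y) * w (x - y)) *\<^sub>R (x - y))
       = (\<integral>y. A (x,y) *\<^sub>R (w (x - y) *\<^sub>R (x - y)) \<partial>lborel)"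
  unfolding set_lebesgue_integral_def
proof (rule integral_completion_AE_cong)
  show "(\<lambda>y. A (x,y) *\<^sub>R (w (x - y) *\<^sub>R (x - y))) \<in> borel_measurable lborel" by simp
  show "AE y in lborel. indicator D y *\<^sub>R ((q (x,y) * w (x - y)) *\<^sub>R (x - y)) = A (x,y) *\<^sub>R (w (x - y) *\<^sub>R (x - y))"
    using AE by eventually_elim (use x in \<open>auto simp: indicator_def\<close>)
qed

lemma set_integral_first_moment_pairing:
  fixes q :: "'a::euclidean_space \<times> 'a \<Rightarrow> real" and D \<Omega> :: "'a set" and w :: "'a \<Rightarrow> real" and \<psi> :: "'a \<Rightarrow> 'a"
  assumes q: "set_borel_measurable lebesgue (D\<times>D) q" and fin: "L12norm D q < top"
    and [measurable]: "w \<in> borel_measurable borel" "\<psi> \<in> borel_measurable borel"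
    and M: "\<And>x. norm (\<psi> x) \<le> M"
    and B: "B \<ge> 0" "\<And>x. (\<integral>\<^sup>+y. ennreal ((norm (x - y) * w (x - y))\<^sup>2) \<partial>lborel) \<le> ennreal (B\<^sup>2)"
    and \<Omega>D: "\<Omega> \<subseteq> D" and \<psi>0: "\<And>x. x \<notin> \<Omega> \<Longrightarrow> \<psi> x = 0"
  shows "set_lebesgue_integral lebesgue (D\<times>D) (\<lambda>p. q p * (w (fst p - snd p) * (\<psi> (fst p) \<bullet> (fst p - snd p))))
       = set_lebesgue_integral lebesgue \<Omega> (\<lambda>x. \<psi> x \<bullet> set_lebesgue_integral lebesgue D (\<lambda>x'. (q (x,x') * w (x - x')) *\<^sub>R (x - x')))"
proof -
  obtain A where A[measurable]: "A \<in> borel_measurable borel"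
    and AE1: "AE p in (lborel::('a\<times>'a) measure). indicator (D\<times>D) p * q p = A p"
    and AE2: "AE x in lborel. AE y in lborel. indicator (D\<times>D) (x,y) * q (x,y) = A (x,y)"
    and L: "L12norm D q = (\<integral>\<^sup>+x. sqrtE (\<integral>\<^sup>+y. ennreal ((A (x,y))\<^sup>2) \<partial>lborel) \<partial>lborel)"
    using L12norm_borel_representative[OF q] by blast
  define F where "F p = A p *\<^sub>R (w (fst p - snd p) *\<^sub>R (fst p - snd p))" for p
  define G where "G p = \<psi> (fst p) \<bullet> F p" for p
  have intF: "integrable lborel F"
    unfolding F_def using fin L by (intro integrable_representative_first_moment[OF A _ B]) simp_all
  have intG: "integrable lborel G"
    unfolding G_def by (rule integrable_inner_bounded[OF intF _ M]) measurable
  have "set_lebesgue_integral lebesgue (D\<times>D) (\<lambda>p. q p * (w (fst p - snd p) * (\<psi> (fst p) \<bullet> (fst p - snd p))))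
      = integral\<^sup>L lborel G"
    unfolding set_lebesgue_integral_def
  proof (rule integral_completion_AE_cong)
    show "G \<in> borel_measurable lborel" unfolding G_def F_def by simp
    show "AE p in lborel. indicator (D \<times> D) p *\<^sub>R (q p * (w (fst p - snd p) * (\<psi> (fst p) \<bullet> (fst p - snd p)))) = G p"
      using AE1 by eventually_elim (simp add: G_def F_def)
  qed
  also have "\<dots> = (\<integral>x. (\<integral>y. G (x,y) \<partial>lborel) \<partial>lborel)"
    using lborel_pair.integral_fst'[of G] intG by (simp add: lborel_prod)
  also have "\<dots> = integral\<^sup>L lebesgue (\<lambda>x. indicator \<Omega> x *\<^sub>R
      (\<psi> x \<bullet> set_lebesgue_integral lebesgue D (\<lambda>x'. (q (x,x') * w (x - x')) *\<^sub>R (x - x'))))"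
  proof (rule integral_completion_AE_cong[symmetric])
    show "(\<lambda>x. \<integral>y. G (x,y) \<partial>lborel) \<in> borel_measurable lborel"
      by (rule lborel.borel_measurable_lebesgue_integral) (unfold lborel_prod G_def F_def, simp)
    have "AE x in lborel. integrable lborel (\<lambda>y. F (x,y))"
      using lborel_pair.AE_integrable_fst'[of F] intF by (simp add: lborel_prod)
    then show "AE x in lborel. indicator \<Omega> x *\<^sub>R (\<psi> x \<bullet> set_lebesgue_integral lebesgue D
        (\<lambda>x'. (q (x,x') * w (x - x')) *\<^sub>R (x - x'))) = (\<integral>y. G (x,y) \<partial>lborel)"
      using AE2
    proof eventually_elim
      case (elim x)
      show ?case
      proof (cases "x \<in> \<Omega>")
        case True
        then have "set_lebesgue_integral lebesgue D (\<lambda>x'. (q (x,x') * w (x - x')) *\<^sub>R (x - x'))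
            = (\<integral>y. F (x,y) \<partial>lborel)"
          unfolding F_def fst_conv snd_conv using \<Omega>D elim(2)
          by (intro set_integral_slice_representative) auto
        moreover have "(\<integral>y. G (x,y) \<partial>lborel) = \<psi> x \<bullet> (\<integral>y. F (x,y) \<partial>lborel)"
          unfolding G_def using elim(1) by simp
        ultimately show ?thesis using True by simp
      qed (simp add: G_def \<psi>0)
    qed
  qed
  finally show ?thesis by (simp add: set_lebesgue_integral_def)
qed

section \<open>The kernel normalisation\<close>

lemma normalized_inner_ge_near_half_unit:
  fixes e x :: "'a::real_inner"
  assumes e: "norm e = 1" and x: "dist x ((1/2) *\<^sub>R e) < 1/4"
  shows "norm x \<le> 3/4" and "(x /\<^sub>R norm x) \<bullet> e \<ge> 1/3"
proof -
  have d: "norm (x - (1/2) *\<^sub>R e) < 1/4" using x by (simp add: dist_norm)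
  have "norm x \<le> norm (x - (1/2) *\<^sub>R e) + norm ((1/2) *\<^sub>R e)"
    using norm_triangle_ineq[of "x - (1/2) *\<^sub>R e" "(1/2) *\<^sub>R e"] by simp
  then show nx: "norm x \<le> 3/4" using d e by simp
  have "\<bar>(x - (1/2) *\<^sub>R e) \<bullet> e\<bar> \<le> norm (x - (1/2) *\<^sub>R e) * norm e"
    by (rule Cauchy_Schwarz_ineq2)
  then have "\<bar>(x - (1/2) *\<^sub>R e) \<bullet> e\<bar> \<le> 1/4" using d e by simp
  moreover have "(x - (1/2) *\<^sub>R e) \<bullet> e = x \<bullet> e - 1/2"
    using e by (simp add: inner_diff_left dot_square_norm)
  ultimately have xe: "x \<bullet> e \<ge> 1/4" by linarith
  then have "norm x > 0" by auto
  have "(x /\<^sub>R norm x) \<bullet> e = (x \<bullet> e) / norm x" by (simp add: divide_inverse_commute)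
  also have "\<dots> \<ge> (1/4) / (3/4)" using xe nx \<open>norm x > 0\<close> by (intro frac_le) auto
  finally show "(x /\<^sub>R norm x) \<bullet> e \<ge> 1/3" by simp
qed

lemma set_integral_ball_normalized_inner_sq_pos:
  fixes e :: "'a::euclidean_space"
  assumes e: "norm e = 1"
  shows "set_lebesgue_integral lebesgue (ball 0 1) (\<lambda>x. ((x /\<^sub>R norm x) \<bullet> e)\<^sup>2) > 0"
proof -
  define h :: "'a \<Rightarrow> real" where "h = (\<lambda>x. ((x /\<^sub>R norm x) \<bullet> e)\<^sup>2)"
  define B where "B = ball ((1/2) *\<^sub>R e) (1/4)"
  have hm: "h \<in> borel_measurable lebesgue"
    by (rule borel_measurable_lebesgueI) (unfold h_def, measurable)
  have h_le: "h x \<le> 1" for x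
  proof -
    have "\<bar>(x /\<^sub>R norm x) \<bullet> e\<bar> \<le> norm (x /\<^sub>R norm x) * norm e" by (rule Cauchy_Schwarz_ineq2)
    also have "\<dots> \<le> 1" using e by (cases "x = 0") auto
    finally show ?thesis unfolding h_def using abs_square_le_1 by blast
  qed
  have lower: "(1/9) * indicator B x \<le> indicator (ball 0 1) x *\<^sub>R h x" for x
  proof (cases "x \<in> B")
    case True
    then have x: "dist x ((1/2) *\<^sub>R e) < 1/4" by (simp add: B_def dist_commute)
    have "h x \<ge> (1/3)\<^sup>2"
      unfolding h_def using normalized_inner_ge_near_half_unit(2)[OF e x] by (intro power_mono) auto
    moreover have "x \<in> ball 0 1" using normalized_inner_ge_near_half_unit(1)[OF e x] by simp
    ultimately show ?thesis using True by (simp add: power2_eq_square)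
  qed (simp add: h_def)
  have int1: "integrable lebesgue (\<lambda>x. (1/9) * indicator B x :: real)"
    unfolding B_def using emeasure_lborel_ball_finite[of "(1/2) *\<^sub>R e" "1/4"]
    by (intro integrable_mult_right) (simp add: integrable_indicator_iff)
  have int2: "integrable lebesgue (\<lambda>x. indicator (ball 0 1) x *\<^sub>R h x)"
  proof (rule Bochner_Integration.integrable_bound)
    show "integrable lebesgue (\<lambda>x. indicator (ball (0::'a) 1) x :: real)"
      using emeasure_lborel_ball_finite[of "0::'a" 1] by (simp add: integrable_indicator_iff)
    show "(\<lambda>x. indicator (ball 0 1) x *\<^sub>R h x) \<in> borel_measurable lebesgue"
      using hm by (intro borel_measurable_scaleR borel_measurable_indicator) auto
    show "AE x in lebesgue. norm (indicator (ball 0 1) x *\<^sub>R h x) \<le> norm (indicator (ball (0::'a) 1) x :: real)"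
      using h_le by (intro AE_I2) (simp add: indicator_def h_def)
  qed
  have "(1/9) * measure lebesgue B = integral\<^sup>L lebesgue (\<lambda>x. (1/9) * indicator B x :: real)"
    unfolding B_def by simp
  also have "\<dots> \<le> set_lebesgue_integral lebesgue (ball 0 1) h"
    unfolding set_lebesgue_integral_def by (rule integral_mono[OF int1 int2 lower])
  finally have "(1/9) * measure lebesgue B \<le> set_lebesgue_integral lebesgue (ball 0 1) h" .
  moreover have "measure lebesgue B > 0"
    using content_ball_pos[of "1/4" "(1/2) *\<^sub>R e"] by (simp add: B_def measure_completion)
  ultimately show ?thesis unfolding h_def by linarith
qed

lemma K2n_pos: "K2n TYPE('a::euclidean_space) > 0"
proof -
  define e :: 'a where "e = (SOME b. b \<in> Basis)"
  have "e \<in> Basis" unfolding e_def by (rule someI_ex) (use nonempty_Basis in blast)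
  then have "norm e = 1" by simp
  moreover have "measure lebesgue (ball (0::'a) 1) > 0"
    using content_ball_pos[of "1" "0::'a"] by (simp add: measure_completion)
  ultimately show ?thesis
    unfolding K2n_def Let_def e_def[symmetric]
    by (intro divide_pos_pos set_integral_ball_normalized_inner_sq_pos)
qed

lemma admissible_kernelsD:
  fixes \<omega> :: "real \<Rightarrow> 'a::euclidean_space \<Rightarrow> real"
  assumes "admissible_kernels dbar \<omega>" "0 < \<delta>" "\<delta> < dbar"
  shows "\<omega> \<delta> \<in> borel_measurable borel" and "\<omega> \<delta> z \<ge> 0"
    and "norm z \<ge> \<delta> \<Longrightarrow> \<omega> \<delta> z = 0" and "norm z = norm z' \<Longrightarrow> \<omega> \<delta> z = \<omega> \<delta> z'"
    and "integral\<^sup>L lebesgue (\<lambda>z. (norm z)\<^sup>2 * (\<omega> \<delta> z)\<^sup>2) = inverse (K2n TYPE('a))"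
  using assms unfolding admissible_kernels_def by blast+

lemma nn_integral_kernel_moment:
  fixes \<omega> :: "real \<Rightarrow> 'a::euclidean_space \<Rightarrow> real"
  assumes kern: "admissible_kernels dbar \<omega>" and d: "0 < d" "d < dbar"
  shows "(\<integral>\<^sup>+y. ennreal ((norm (x - y) * \<omega> d (x - y))\<^sup>2) \<partial>lborel) = ennreal (inverse (K2n TYPE('a)))"
proof -
  note w = admissible_kernelsD[OF kern d]
  have [measurable]: "\<omega> d \<in> borel_measurable borel" by (rule w(1))
  define g where "g z = (norm z * \<omega> d z)\<^sup>2" for z :: 'a
  have gm[measurable]: "g \<in> borel_measurable borel" unfolding g_def by measurable
  have gI: "integral\<^sup>L lebesgue g = inverse (K2n TYPE('a))"
  proof -
    have "g = (\<lambda>z. (norm z)\<^sup>2 * (\<omega> d z)\<^sup>2)" by (rule ext) (simp add: g_def power_mult_distrib)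
    then show ?thesis using w(5) by simp
  qed
  have "inverse (K2n TYPE('a)) \<noteq> 0" using K2n_pos[where 'a='a] by simp
  then have intg: "integrable lebesgue g" using gI not_integrable_integral_eq by metis
  have "(\<integral>\<^sup>+z. ennreal (g z) \<partial>lebesgue) = ennreal (integral\<^sup>L lebesgue g)"
    by (rule nn_integral_eq_integral[OF intg]) (simp add: g_def)
  then have gN: "(\<integral>\<^sup>+z. ennreal (g z) \<partial>lborel) = ennreal (inverse (K2n TYPE('a)))"
    using gI by (simp add: nn_integral_completion)
  have "(\<integral>\<^sup>+y. ennreal ((norm (x - y) * \<omega> d (x - y))\<^sup>2) \<partial>lborel) = (\<integral>\<^sup>+y. ennreal (g ((- x) + y)) \<partial>lborel)"
  proof (rule nn_integral_cong)
    fix y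
    have "norm (x - y) = norm (-x + y)" by (metis add.commute norm_minus_commute uminus_add_conv_diff)
    then show "ennreal ((norm (x - y) * \<omega> d (x - y))\<^sup>2) = ennreal (g (- x + y))"
      unfolding g_def using w(4)[of "x - y" "- x + y"] by simp
  qed
  also have "\<dots> = (\<integral>\<^sup>+z. ennreal (g z) \<partial>distr lborel borel ((+) (- x)))"
    by (rule nn_integral_distr[symmetric]) auto
  also have "\<dots> = (\<integral>\<^sup>+z. ennreal (g z) \<partial>lborel)" by (simp add: lborel_distr_plus)
  finally show ?thesis using gN by simp
qed

lemma nn_integral_kernel_dominated_le:
  fixes \<omega> :: "real \<Rightarrow> 'a::euclidean_space \<Rightarrow> real" and W :: "'a \<times> 'a \<Rightarrow> real"
  assumes kern: "admissible_kernels dbar \<omega>" and d: "0 < d" "d < dbar" and c: "c \<ge> 0"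
    and Wle: "\<And>x y. \<bar>W (x,y)\<bar> \<le> c * (norm (x - y) * \<omega> d (x - y))"
  shows "(\<integral>\<^sup>+y. ennreal ((W (x,y))\<^sup>2) \<partial>lborel) \<le> ennreal ((c * sqrt (inverse (K2n TYPE('a))))\<^sup>2)"
proof -
  have [measurable]: "\<omega> d \<in> borel_measurable borel" by (rule admissible_kernelsD(1)[OF kern d])
  have Kp: "K2n TYPE('a) > 0" by (rule K2n_pos)
  have "(\<integral>\<^sup>+y. ennreal ((W (x,y))\<^sup>2) \<partial>lborel) \<le> (\<integral>\<^sup>+y. ennreal (c\<^sup>2) * ennreal ((norm (x - y) * \<omega> d (x - y))\<^sup>2) \<partial>lborel)"
  proof (rule nn_integral_mono)
    fix y
    have a: "\<bar>W (x,y)\<bar> \<le> c * (norm (x - y) * \<omega> d (x - y))" by (rule Wle)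
    have "(W (x,y))\<^sup>2 = \<bar>W (x,y)\<bar>\<^sup>2" by simp
    also have "\<dots> \<le> (c * (norm (x - y) * \<omega> d (x - y)))\<^sup>2"
      by (rule power_mono[OF a]) simp
    finally show "ennreal ((W (x,y))\<^sup>2) \<le> ennreal (c\<^sup>2) * ennreal ((norm (x - y) * \<omega> d (x - y))\<^sup>2)"
      by (simp add: ennreal_mult[symmetric] power_mult_distrib)
  qed
  also have "\<dots> = ennreal (c\<^sup>2) * (\<integral>\<^sup>+y. ennreal ((norm (x - y) * \<omega> d (x - y))\<^sup>2) \<partial>lborel)"
    by (rule nn_integral_cmult) measurable
  also have "\<dots> = ennreal (c\<^sup>2) * ennreal (inverse (K2n TYPE('a)))"
    using nn_integral_kernel_moment[OF kern d] by simp
  also have "\<dots> = ennreal ((c * sqrt (inverse (K2n TYPE('a))))\<^sup>2)"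
    using Kp by (simp add: ennreal_mult[symmetric] power_mult_distrib)
  finally show ?thesis .
qed

section \<open>Nonlocal gradients of compactly supported C^1 functions\<close>

lemma open_Omega_d: "open (Omega_d \<Omega> \<delta>)"
  unfolding Omega_d_def by (intro open_UN) auto

lemma subset_Omega_d: "\<delta> > 0 \<Longrightarrow> \<Omega> \<subseteq> Omega_d \<Omega> \<delta>"
  unfolding Omega_d_def by auto

lemma bounded_Omega_d:
  assumes "bounded \<Omega>"
  shows "bounded (Omega_d \<Omega> \<delta>)"
proof -
  obtain R where R: "\<forall>x\<in>\<Omega>. norm x \<le> R" using assms unfolding bounded_iff by blast
  have "norm y \<le> R + \<delta>" if y: "y \<in> Omega_d \<Omega> \<delta>" for y
  proof -
    obtain x where x: "x \<in> \<Omega>" "dist x y < \<delta>" using y unfolding Omega_d_def by auto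
    have "norm y \<le> norm x + dist x y"
      using norm_triangle_sub[of y x] by (simp add: dist_norm norm_minus_commute)
    then show ?thesis using R x by fastforce
  qed
  then show ?thesis unfolding bounded_iff by blast
qed

lemma L2on_if_slice_bounded:
  fixes W :: "'a::euclidean_space \<times> 'a \<Rightarrow> real"
  assumes D: "open D" "bounded D" and Wm[measurable]: "W \<in> borel_measurable borel"
    and B: "\<And>x. (\<integral>\<^sup>+y. ennreal ((W (x,y))\<^sup>2) \<partial>lborel) \<le> ennreal (B\<^sup>2)"
  shows "L2on (D \<times> D) W"
proof -
  have DD[measurable]: "D \<times> D \<in> sets borel" using D by (simp add: open_Times)
  have "(\<integral>\<^sup>+p. ennreal (indicator (D\<times>D) p * (W p)\<^sup>2) \<partial>lborel)
      = (\<integral>\<^sup>+p. ennreal (indicator (D\<times>D) p * (W p)\<^sup>2) \<partial>(lborel \<Otimes>\<^sub>M lborel))"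
    by (simp add: lborel_prod)
  also have "\<dots> = (\<integral>\<^sup>+x. \<integral>\<^sup>+y. ennreal (indicator (D\<times>D) (x,y) * (W (x,y))\<^sup>2) \<partial>lborel \<partial>lborel)"
    by (rule lborel.nn_integral_fst[symmetric]) (unfold lborel_prod, measurable)
  also have "\<dots> \<le> (\<integral>\<^sup>+x. ennreal (B\<^sup>2) * indicator D x \<partial>lborel)"
  proof (rule nn_integral_mono)
    fix x
    have "(\<integral>\<^sup>+y. ennreal (indicator (D\<times>D) (x,y) * (W (x,y))\<^sup>2) \<partial>lborel)
        \<le> indicator D x * (\<integral>\<^sup>+y. ennreal ((W (x,y))\<^sup>2) \<partial>lborel)"
      by (cases "x \<in> D") (auto simp: indicator_def intro!: nn_integral_mono)
    also have "\<dots> \<le> ennreal (B\<^sup>2) * indicator D x"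
      using B[of x] by (cases "x \<in> D") auto
    finally show "(\<integral>\<^sup>+y. ennreal (indicator (D\<times>D) (x,y) * (W (x,y))\<^sup>2) \<partial>lborel)
        \<le> ennreal (B\<^sup>2) * indicator D x" .
  qed
  also have "\<dots> = ennreal (B\<^sup>2) * emeasure lborel D"
    using D by (intro nn_integral_cmult_indicator) auto
  also have "\<dots> < top"
    using emeasure_bounded_finite[OF D(2)] by (simp add: ennreal_mult_less_top)
  finally have fin: "(\<integral>\<^sup>+p. ennreal (indicator (D\<times>D) p * (W p)\<^sup>2) \<partial>lborel) < top" .
  have "set_integrable lebesgue (D\<times>D) (\<lambda>p. (W p)\<^sup>2)"
    unfolding set_integrable_def
  proof (rule integrableI_bounded)
    show "(\<lambda>p. indicator (D\<times>D) p *\<^sub>R (W p)\<^sup>2) \<in> borel_measurable lebesgue"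
      by (rule borel_measurable_lebesgueI) measurable
    show "(\<integral>\<^sup>+p. ennreal (norm (indicator (D\<times>D) p *\<^sub>R (W p)\<^sup>2)) \<partial>lebesgue) < \<infinity>"
      using fin by (simp add: nn_integral_completion)
  qed
  moreover have "set_borel_measurable lebesgue (D\<times>D) W"
    unfolding set_borel_measurable_def by (rule borel_measurable_lebesgueI) measurable
  ultimately show ?thesis by (simp add: L2on_def)
qed

lemma borel_measurable_Gop [measurable]:
  assumes [measurable]: "ext0 \<Omega> u \<in> borel_measurable borel" "\<omega> \<delta> \<in> borel_measurable borel"
  shows "Gop \<Omega> \<omega> \<delta> u \<in> borel_measurable borel"
proof -
  have "Gop \<Omega> \<omega> \<delta> u = (\<lambda>p. (ext0 \<Omega> u (fst p) - ext0 \<Omega> u (snd p)) * \<omega> \<delta> (fst p - snd p))"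
    by (rule ext) (simp add: Gop_def)
  then show ?thesis by simp
qed

lemma abs_Gop_le_if_lipschitz:
  assumes L: "\<And>x y. \<bar>ext0 \<Omega> u x - ext0 \<Omega> u y\<bar> \<le> L * norm (x - y)" and \<omega>: "\<And>z. \<omega> \<delta> z \<ge> 0"
  shows "\<bar>Gop \<Omega> \<omega> \<delta> u (x,y)\<bar> \<le> L * (norm (x - y) * \<omega> \<delta> (x - y))"
proof -
  have "\<bar>Gop \<Omega> \<omega> \<delta> u (x,y)\<bar> = \<bar>ext0 \<Omega> u x - ext0 \<Omega> u y\<bar> * \<omega> \<delta> (x - y)"
    using \<omega> by (simp add: Gop_def abs_mult)
  also have "\<dots> \<le> L * norm (x - y) * \<omega> \<delta> (x - y)" by (rule mult_right_mono[OF L \<omega>])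
  finally show ?thesis by (simp add: mult.assoc)
qed

lemma abs_first_moment_le:
  fixes \<psi> :: "'a \<Rightarrow> 'a::real_inner"
  assumes M: "\<And>x. norm (\<psi> x) \<le> M" and w: "\<And>z. w z \<ge> 0"
  shows "\<bar>w (x - y) * (\<psi> x \<bullet> (x - y))\<bar> \<le> M * (norm (x - y) * w (x - y))"
proof -
  have "\<bar>\<psi> x \<bullet> (x - y)\<bar> \<le> M * norm (x - y)"
    using Cauchy_Schwarz_ineq2[of "\<psi> x" "x - y"] M[of x]
    by (meson mult_right_mono norm_ge_zero order_trans)
  from mult_left_mono[OF this w[of "x - y"]] show ?thesis
    using w[of "x - y"] by (simp add: abs_mult mult_ac)
qed

lemma bounded_if_continuous_vanishing_outside_compact:
  fixes f :: "'a::metric_space \<Rightarrow> 'b::real_normed_vector"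
  assumes K: "compact K" and f: "continuous_on UNIV f" and f0: "\<And>x. x \<notin> K \<Longrightarrow> f x = 0"
  obtains M where "M \<ge> 0" "\<And>x. norm (f x) \<le> M"
proof -
  have "compact (f ` K)" by (rule compact_continuous_image[OF continuous_on_subset[OF f] K]) simp
  then obtain M where M: "\<forall>y\<in>f ` K. norm y \<le> M" using compact_imp_bounded bounded_iff by metis
  have "norm (f x) \<le> max M 0" for x using M f0[of x] by (cases "x \<in> K") auto
  then show ?thesis using that[of "max M 0"] by simp
qed

lemma uniformly_continuous_if_vanishing_outside_compact:
  fixes f :: "'a::euclidean_space \<Rightarrow> 'b::real_normed_vector"
  assumes K: "compact K" and f: "continuous_on UNIV f" and f0: "\<And>x. x \<notin> K \<Longrightarrow> f x = 0"
  shows "uniformly_continuous_on UNIV f"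
  unfolding uniformly_continuous_on_def
proof (intro allI impI)
  fix e :: real assume e: "e > 0"
  obtain R where R: "K \<subseteq> cball 0 R"
    using compact_imp_bounded[OF K] unfolding bounded_iff subset_iff mem_cball_0 by blast
  have "uniformly_continuous_on (cball 0 (R + 1)) f"
    by (rule compact_uniformly_continuous[OF continuous_on_subset[OF f]]) simp_all
  then obtain d where d: "d > 0"
    "\<forall>x\<in>cball 0 (R + 1). \<forall>y\<in>cball 0 (R + 1). dist y x < d \<longrightarrow> dist (f y) (f x) < e"
    using e unfolding uniformly_continuous_on_def by blast
  show "\<exists>d>0. \<forall>x\<in>UNIV. \<forall>y\<in>UNIV. dist y x < d \<longrightarrow> dist (f y) (f x) < e"
  proof (intro exI[of _ "min d 1"] conjI ballI impI)
    fix x y :: 'a assume xy: "dist y x < min d 1"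
    show "dist (f y) (f x) < e"
    proof (cases "x \<in> cball 0 (R + 1) \<and> y \<in> cball 0 (R + 1)")
      case True
      then show ?thesis using d(2) xy by auto
    next
      case False
      have "norm x \<le> norm y + dist y x" "norm y \<le> norm x + dist y x"
        using norm_triangle_sub[of x y] norm_triangle_sub[of y x]
        by (simp_all add: dist_norm norm_minus_commute)
      then have "x \<notin> cball 0 R" "y \<notin> cball 0 R" using False xy by (auto simp: mem_cball_0)
      then have "f x = 0" "f y = 0" using R f0 by blast+
      then show ?thesis using e by simp
    qed
  qed (use d in auto)
qed

locale C1_test_function =
  fixes \<Omega> :: "'a::euclidean_space set" and \<phi> :: "'a \<Rightarrow> real" and g :: "'a \<Rightarrow> 'a" and K :: "'a set"
  assumes open_domain: "open \<Omega>"
    and has_derivative: "\<And>x. x \<in> \<Omega> \<Longrightarrow> (\<phi> has_derivative (\<lambda>v. g x \<bullet> v)) (at x)"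
    and continuous_grad: "continuous_on \<Omega> g"
    and compact_support: "compact K" and support_subset: "K \<subseteq> \<Omega>"
    and vanishes_outside: "\<And>x. x \<in> \<Omega> \<Longrightarrow> x \<notin> K \<Longrightarrow> \<phi> x = 0"
begin

definition grad_ext :: "'a \<Rightarrow> 'a" where
  "grad_ext x = (if x \<in> \<Omega> then g x else 0)"

lemma grad_vanishes_outside:
  assumes x: "x \<in> \<Omega>" "x \<notin> K"
  shows "g x = 0"
proof -
  have "open (\<Omega> - K)" using open_domain compact_support by (simp add: compact_imp_closed open_Diff)
  then have "(\<phi> has_derivative (\<lambda>v. 0)) (at x)"
    by (rule has_derivative_transform_within_open[OF has_derivative_const])
      (use x vanishes_outside in auto)
  then have "(\<lambda>v. g x \<bullet> v) = (\<lambda>v. 0)" by (rule has_derivative_unique[OF has_derivative[OF x(1)]])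
  then have "g x \<bullet> g x = 0" by metis
  then show "g x = 0" by simp
qed

lemma grad_ext_vanishes_outside: "x \<notin> K \<Longrightarrow> grad_ext x = 0"
  using grad_vanishes_outside by (auto simp: grad_ext_def)

lemma ext0_vanishes_outside: "x \<notin> K \<Longrightarrow> ext0 \<Omega> \<phi> x = 0"
  using vanishes_outside by (auto simp: ext0_def)

lemma ext0_has_derivative: "(ext0 \<Omega> \<phi> has_derivative (\<lambda>v. grad_ext x \<bullet> v)) (at x)"
proof (cases "x \<in> \<Omega>")
  case True
  have "(ext0 \<Omega> \<phi> has_derivative (\<lambda>v. g x \<bullet> v)) (at x)"
    by (rule has_derivative_transform_within_open[OF has_derivative[OF True] open_domain True])
      (simp add: ext0_def)
  then show ?thesis using True by (simp add: grad_ext_def)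
next
  case False
  have "open (- K)" using compact_support by (simp add: compact_imp_closed open_Compl)
  then have "(ext0 \<Omega> \<phi> has_derivative (\<lambda>v. 0)) (at x)"
    by (rule has_derivative_transform_within_open[OF has_derivative_const])
      (use False support_subset ext0_vanishes_outside in auto)
  then show ?thesis using False by (simp add: grad_ext_def)
qed

lemma continuous_on_grad_ext: "continuous_on UNIV grad_ext"
proof -
  have "continuous_on \<Omega> grad_ext"
    using continuous_grad by (rule continuous_on_eq) (simp add: grad_ext_def)
  moreover have "continuous_on (- K) grad_ext"
    by (rule continuous_on_eq[OF continuous_on_const[of _ 0]]) (simp add: grad_ext_vanishes_outside)
  moreover have "open (- K)" using compact_support by (simp add: compact_imp_closed open_Compl)
  ultimately have "continuous_on (\<Omega> \<union> - K) grad_ext"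
    using open_domain by (intro continuous_on_open_Un)
  moreover have "\<Omega> \<union> - K = UNIV" using support_subset by auto
  ultimately show ?thesis by simp
qed

lemma continuous_on_ext0: "continuous_on UNIV (ext0 \<Omega> \<phi>)"
  using ext0_has_derivative by (meson continuous_at_imp_continuous_on has_derivative_continuous)

lemma borel_measurable_grad_ext [measurable]: "grad_ext \<in> borel_measurable borel"
  by (rule borel_measurable_continuous_onI[OF continuous_on_grad_ext])

lemma borel_measurable_ext0 [measurable]: "ext0 \<Omega> \<phi> \<in> borel_measurable borel"
  by (rule borel_measurable_continuous_onI[OF continuous_on_ext0])

lemma bounded_grad_ext:
  obtains M where "M \<ge> 0" "\<And>x. norm (grad_ext x) \<le> M"
  using bounded_if_continuous_vanishing_outside_compact[OF compact_support continuous_on_grad_ext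
      grad_ext_vanishes_outside] by blast

lemma bounded_ext0:
  obtains M where "M \<ge> 0" "\<And>x. \<bar>ext0 \<Omega> \<phi> x\<bar> \<le> M"
  using bounded_if_continuous_vanishing_outside_compact[OF compact_support continuous_on_ext0
      ext0_vanishes_outside] by auto

lemma ext0_first_order_uniform:
  assumes e: "e > 0"
  obtains \<eta> where "\<eta> > 0"
    "\<And>x y. norm (y - x) < \<eta> \<Longrightarrow> \<bar>ext0 \<Omega> \<phi> y - ext0 \<Omega> \<phi> x - grad_ext x \<bullet> (y - x)\<bar> \<le> e * norm (y - x)"
proof -
  have "uniformly_continuous_on UNIV grad_ext"
    by (rule uniformly_continuous_if_vanishing_outside_compact[OF compact_support
          continuous_on_grad_ext grad_ext_vanishes_outside])
  then obtain \<eta> where \<eta>: "\<eta> > 0" "\<And>x z. dist z x < \<eta> \<Longrightarrow> dist (grad_ext z) (grad_ext x) < e"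
    using e unfolding uniformly_continuous_on_def by blast
  have "\<bar>ext0 \<Omega> \<phi> y - ext0 \<Omega> \<phi> x - grad_ext x \<bullet> (y - x)\<bar> \<le> e * norm (y - x)"
    if xy: "norm (y - x) < \<eta>" for x y
  proof -
    define F where "F z = ext0 \<Omega> \<phi> z - grad_ext x \<bullet> z" for z
    have deriv: "(F has_derivative (\<lambda>v. (grad_ext z - grad_ext x) \<bullet> v)) (at z within ball x \<eta>)" for z
    proof -
      have "(F has_derivative (\<lambda>v. grad_ext z \<bullet> v - grad_ext x \<bullet> v)) (at z)"
        unfolding F_def by (intro derivative_intros ext0_has_derivative)
      then show ?thesis by (simp add: inner_diff_left has_derivative_at_withinI)
    qed
    have onorm: "onorm (\<lambda>v. (grad_ext z - grad_ext x) \<bullet> v) \<le> e" if "z \<in> ball x \<eta>" for z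
    proof (rule onorm_le)
      fix v
      have "dist z x < \<eta>" using that by (simp add: dist_commute)
      then have close: "norm (grad_ext z - grad_ext x) \<le> e" using \<eta>(2) by (simp add: dist_norm less_imp_le)
      have "norm ((grad_ext z - grad_ext x) \<bullet> v) \<le> norm (grad_ext z - grad_ext x) * norm v"
        unfolding real_norm_def by (rule Cauchy_Schwarz_ineq2)
      also have "\<dots> \<le> e * norm v" using close by (rule mult_right_mono) simp
      finally show "norm ((grad_ext z - grad_ext x) \<bullet> v) \<le> e * norm v" .
    qed
    have "norm (F y - F x) \<le> e * norm (y - x)"
      by (rule differentiable_bound[OF convex_ball deriv onorm])
        (use xy \<eta> in \<open>auto simp: dist_norm norm_minus_commute\<close>)
    then show ?thesis by (simp add: F_def inner_diff_right algebra_simps)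
  qed
  with \<eta>(1) show ?thesis using that by blast
qed

lemma ext0_lipschitz:
  obtains L where "L \<ge> 0" "\<And>x y. \<bar>ext0 \<Omega> \<phi> x - ext0 \<Omega> \<phi> y\<bar> \<le> L * norm (x - y)"
proof -
  obtain M where M: "M \<ge> 0" "\<And>x. norm (grad_ext x) \<le> M" using bounded_grad_ext by blast
  have "onorm (\<lambda>v. grad_ext z \<bullet> v) \<le> M" for z
  proof (rule onorm_le)
    fix v
    have "norm (grad_ext z \<bullet> v) \<le> norm (grad_ext z) * norm v"
      unfolding real_norm_def by (rule Cauchy_Schwarz_ineq2)
    also have "\<dots> \<le> M * norm v" using M by (intro mult_right_mono) auto
    finally show "norm (grad_ext z \<bullet> v) \<le> M * norm v" .
  qed
  then have "\<bar>ext0 \<Omega> \<phi> x - ext0 \<Omega> \<phi> y\<bar> \<le> M * norm (x - y)" for x y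
    using differentiable_bound[OF convex_UNIV, of "ext0 \<Omega> \<phi>" "\<lambda>z v. grad_ext z \<bullet> v" M x y]
      ext0_has_derivative by (simp add: has_derivative_at_withinI)
  with M(1) show ?thesis using that by blast
qed

lemma L2on_test_function:
  assumes "bounded \<Omega>"
  shows "L2on \<Omega> \<phi>"
proof -
  obtain M where M: "M \<ge> 0" "\<And>x. \<bar>ext0 \<Omega> \<phi> x\<bar> \<le> M" using bounded_ext0 by blast
  have ind: "(\<lambda>x. indicator \<Omega> x *\<^sub>R \<phi> x) = ext0 \<Omega> \<phi>"
    "(\<lambda>x. indicator \<Omega> x *\<^sub>R (\<phi> x)\<^sup>2) = (\<lambda>x. (ext0 \<Omega> \<phi> x)\<^sup>2)"
    by (auto simp: ext0_def indicator_def)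
  have "set_borel_measurable lebesgue \<Omega> \<phi>"
    unfolding set_borel_measurable_def ind by (rule borel_measurable_lebesgueI) simp
  moreover have "set_integrable lebesgue \<Omega> (\<lambda>x. (\<phi> x)\<^sup>2)"
    unfolding set_integrable_def
  proof (rule Bochner_Integration.integrable_bound)
    show "integrable lebesgue (\<lambda>x. M\<^sup>2 * indicator \<Omega> x :: real)"
      using emeasure_bounded_finite[OF assms] open_domain
      by (intro integrable_mult_right) (simp add: integrable_indicator_iff emeasure_completion)
    show "(\<lambda>x. indicator \<Omega> x *\<^sub>R (\<phi> x)\<^sup>2) \<in> borel_measurable lebesgue"
      unfolding ind by (rule borel_measurable_lebesgueI) measurable
    have "x \<in> \<Omega> \<Longrightarrow> (\<phi> x)\<^sup>2 \<le> M\<^sup>2" for x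
      using M(2)[of x] abs_le_square_iff[of "\<phi> x" M] abs_of_nonneg[OF M(1)] by (simp add: ext0_def)
    then show "AE x in lebesgue. norm (indicator \<Omega> x *\<^sub>R (\<phi> x)\<^sup>2) \<le> norm (M\<^sup>2 * indicator \<Omega> x :: real)"
      by (intro AE_I2) (auto simp: indicator_def)
  qed
  ultimately show ?thesis by (simp add: L2on_def)
qed

lemma Gop_kernel_dominated:
  assumes kern: "admissible_kernels dbar \<omega>" and d: "0 < d" "d < dbar"
  obtains L where "L \<ge> 0" "\<And>x y. \<bar>Gop \<Omega> \<omega> d \<phi> (x,y)\<bar> \<le> L * (norm (x - y) * \<omega> d (x - y))"
proof -
  obtain L where L: "L \<ge> 0" "\<And>x y. \<bar>ext0 \<Omega> \<phi> x - ext0 \<Omega> \<phi> y\<bar> \<le> L * norm (x - y)"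
    using ext0_lipschitz by blast
  show ?thesis
    by (rule that[OF L(1) abs_Gop_le_if_lipschitz[where \<omega>=\<omega> and \<delta>=d,
          OF L(2) admissible_kernelsD(2)[OF kern d]]])
qed

lemma L2on_Gop:
  assumes kern: "admissible_kernels dbar \<omega>" and d: "0 < d" "d < dbar" and \<Omega>b: "bounded \<Omega>"
  shows "L2on (Omega_d \<Omega> d \<times> Omega_d \<Omega> d) (Gop \<Omega> \<omega> d \<phi>)"
proof -
  obtain L where "L \<ge> 0" "\<And>x y. \<bar>Gop \<Omega> \<omega> d \<phi> (x,y)\<bar> \<le> L * (norm (x - y) * \<omega> d (x - y))"
    using Gop_kernel_dominated[OF kern d] by blast
  from nn_integral_kernel_dominated_le[OF kern d this] show ?thesis
    using admissible_kernelsD(1)[OF kern d]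
    by (intro L2on_if_slice_bounded open_Omega_d bounded_Omega_d \<Omega>b borel_measurable_Gop
        borel_measurable_ext0)
qed

lemma test_function_in_U0:
  assumes "admissible_kernels dbar \<omega>" "0 < d" "d < dbar" "bounded \<Omega>"
  shows "\<phi> \<in> U0 \<Omega> \<omega> d"
  unfolding U0_def using L2on_test_function L2on_Gop assms by blast

lemma Qbar_duality:
  assumes kern: "admissible_kernels dbar \<omega>" and d: "0 < d" "d < dbar" and \<Omega>b: "bounded \<Omega>"
    and f: "L2on \<Omega> f" and q: "q \<in> Qbar \<Omega> \<omega> d f"
  shows "set_lebesgue_integral lebesgue \<Omega> (\<lambda>x. f x * \<phi> x)
       = - set_lebesgue_integral lebesgue (Omega_d \<Omega> d \<times> Omega_d \<Omega> d) (\<lambda>p. q p * Gop \<Omega> \<omega> d \<phi> p)"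
proof -
  define D where "D = Omega_d \<Omega> d"
  define G where "G = Gop \<Omega> \<omega> d \<phi>"
  have Gm[measurable]: "G \<in> borel_measurable borel"
    unfolding G_def using admissible_kernelsD(1)[OF kern d] by measurable
  obtain L where L: "L \<ge> 0" "\<And>x y. \<bar>G (x,y)\<bar> \<le> L * (norm (x - y) * \<omega> d (x - y))"
    unfolding G_def using Gop_kernel_dominated[OF kern d] by blast
  note GB = nn_integral_kernel_dominated_le[OF kern d L]
  have B0: "L * sqrt (inverse (K2n TYPE('a))) \<ge> 0" using L(1) K2n_pos[where 'a='a] by simp
  obtain qs gs where approx: "\<And>k. qs k \<in> Qset \<Omega> \<omega> d" "\<And>k. Drel \<Omega> \<omega> d (qs k) (gs k)"
    and lim_q: "(\<lambda>k. L12norm D (\<lambda>p. qs k p - q p)) \<longlonglongrightarrow> 0"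
    and lim_g: "(\<lambda>k. \<integral>\<^sup>+ x. ennreal (indicator \<Omega> x * (gs k x - f x)\<^sup>2) \<partial>lebesgue) \<longlonglongrightarrow> 0"
    and q_L12: "L12 D q"
    using q unfolding Qbar_def D_def by blast
  have L2qs: "L2on (D\<times>D) (qs k)" and L2gs: "L2on \<Omega> (gs k)" for k
    using approx[of k] unfolding Qset_def Drel_def D_def by auto
  have L2G: "L2on (D\<times>D) G" unfolding D_def G_def by (rule L2on_Gop[OF kern d \<Omega>b])
  have "(\<lambda>k. set_lebesgue_integral lebesgue \<Omega> (\<lambda>x. gs k x * \<phi> x))
      \<longlonglongrightarrow> set_lebesgue_integral lebesgue \<Omega> (\<lambda>x. f x * \<phi> x)"
    by (rule set_integral_tendsto_if_L2_tendsto[OF f L2gs L2on_test_function[OF \<Omega>b] lim_g])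
  moreover have "(\<lambda>k. set_lebesgue_integral lebesgue \<Omega> (\<lambda>x. gs k x * \<phi> x))
      \<longlonglongrightarrow> - set_lebesgue_integral lebesgue (D\<times>D) (\<lambda>p. q p * G p)"
  proof -
    have "set_lebesgue_integral lebesgue \<Omega> (\<lambda>x. gs k x * \<phi> x)
        = - set_lebesgue_integral lebesgue (D\<times>D) (\<lambda>p. qs k p * G p)" for k
      using approx(2)[of k] test_function_in_U0[OF kern d \<Omega>b] unfolding Drel_def D_def G_def by blast
    moreover have "(\<lambda>k. set_lebesgue_integral lebesgue (D\<times>D) (\<lambda>p. qs k p * G p))
        \<longlonglongrightarrow> set_lebesgue_integral lebesgue (D\<times>D) (\<lambda>p. q p * G p)"
      using q_L12 L2qs set_integrable_mult_if_L2on[OF L2qs L2G] unfolding L12_def L2on_def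
      by (intro set_integral_tendsto_if_L12norm_tendsto[OF _ _ _ _ Gm B0 GB lim_q]) auto
    ultimately show ?thesis by (simp add: tendsto_minus)
  qed
  ultimately show ?thesis unfolding D_def G_def by (rule LIMSEQ_unique)
qed

lemma abs_Gop_sub_first_moment_le:
  assumes kern: "admissible_kernels dbar \<omega>" and d: "0 < d" "d < dbar"
    and taylor: "\<And>x y. norm (y - x) < d \<Longrightarrow>
      \<bar>ext0 \<Omega> \<phi> y - ext0 \<Omega> \<phi> x - grad_ext x \<bullet> (y - x)\<bar> \<le> e * norm (y - x)"
  shows "\<bar>Gop \<Omega> \<omega> d \<phi> (x,y) - \<omega> d (x - y) * (grad_ext x \<bullet> (x - y))\<bar>
      \<le> e * (norm (x - y) * \<omega> d (x - y))"
proof (cases "norm (x - y) < d")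
  case True
  have w0: "\<omega> d (x - y) \<ge> 0" by (rule admissible_kernelsD(2)[OF kern d])
  have "Gop \<Omega> \<omega> d \<phi> (x,y) - \<omega> d (x - y) * (grad_ext x \<bullet> (x - y))
      = - (\<omega> d (x - y) * (ext0 \<Omega> \<phi> y - ext0 \<Omega> \<phi> x - grad_ext x \<bullet> (y - x)))"
    by (simp add: Gop_def algebra_simps inner_diff_right)
  also have "\<bar>\<dots>\<bar> \<le> \<omega> d (x - y) * (e * norm (y - x))"
  proof -
    have "norm (y - x) < d" using True by (simp add: norm_minus_commute)
    from mult_left_mono[OF taylor[OF this] w0] show ?thesis by (simp add: abs_mult w0)
  qed
  finally show ?thesis by (simp add: norm_minus_commute algebra_simps)
next
  case False
  then show ?thesis by (simp add: Gop_def admissible_kernelsD(3)[OF kern d])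
qed

lemma set_integral_first_moment_eq_Rop:
  assumes kern: "admissible_kernels dbar \<omega>" and d: "0 < d" "d < dbar"
    and q: "set_borel_measurable lebesgue (Omega_d \<Omega> d \<times> Omega_d \<Omega> d) q" "L12norm (Omega_d \<Omega> d) q < top"
  shows "set_lebesgue_integral lebesgue (Omega_d \<Omega> d \<times> Omega_d \<Omega> d)
        (\<lambda>p. q p * (\<omega> d (fst p - snd p) * (grad_ext (fst p) \<bullet> (fst p - snd p))))
      = set_lebesgue_integral lebesgue \<Omega> (\<lambda>x. grad_ext x \<bullet> Rop \<Omega> \<omega> d q x)"
proof -
  obtain M where M: "M \<ge> 0" "\<And>x. norm (grad_ext x) \<le> M" using bounded_grad_ext by blast
  have c0: "sqrt (inverse (K2n TYPE('a))) \<ge> 0" using K2n_pos[where 'a='a] by simp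
  have "(\<integral>\<^sup>+y. ennreal ((norm (x - y) * \<omega> d (x - y))\<^sup>2) \<partial>lborel)
      \<le> ennreal ((sqrt (inverse (K2n TYPE('a))))\<^sup>2)" for x
    using nn_integral_kernel_moment[OF kern d, of x] K2n_pos[where 'a='a] by simp
  then show ?thesis
    unfolding Rop_def
    by (rule set_integral_first_moment_pairing[OF q admissible_kernelsD(1)[OF kern d]
          borel_measurable_grad_ext M(2) c0 _ subset_Omega_d[OF d(1)]]) (simp add: grad_ext_def)
qed

lemma Qbar_pairing_defect_le:
  assumes kern: "admissible_kernels dbar \<omega>" and d: "0 < d" "d < dbar" and \<Omega>b: "bounded \<Omega>"
    and f: "L2on \<Omega> f" and q: "q \<in> Qbar \<Omega> \<omega> d f" and e: "e \<ge> 0"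
    and taylor: "\<And>x y. norm (y - x) < d \<Longrightarrow>
      \<bar>ext0 \<Omega> \<phi> y - ext0 \<Omega> \<phi> x - grad_ext x \<bullet> (y - x)\<bar> \<le> e * norm (y - x)"
  shows "\<bar>set_lebesgue_integral lebesgue \<Omega> (\<lambda>x. f x * \<phi> x)
        + set_lebesgue_integral lebesgue \<Omega> (\<lambda>x. grad_ext x \<bullet> Rop \<Omega> \<omega> d q x)\<bar>
      \<le> e * sqrt (inverse (K2n TYPE('a))) * enn2real (L12norm (Omega_d \<Omega> d) q)"
proof -
  define D where "D = Omega_d \<Omega> d"
  define c where "c = sqrt (inverse (K2n TYPE('a)))"
  define W1 where "W1 p = \<omega> d (fst p - snd p) * (grad_ext (fst p) \<bullet> (fst p - snd p))" for p
  define W2 where "W2 p = Gop \<Omega> \<omega> d \<phi> p - W1 p" for p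
  have c0: "c \<ge> 0" using K2n_pos[where 'a='a] by (simp add: c_def)
  note w = admissible_kernelsD[OF kern d]
  have [measurable]: "\<omega> d \<in> borel_measurable borel" by (rule w(1))
  have W1m[measurable]: "W1 \<in> borel_measurable borel" unfolding W1_def by measurable
  have W2m[measurable]: "W2 \<in> borel_measurable borel" unfolding W2_def by measurable
  obtain M where M: "M \<ge> 0" "\<And>x. norm (grad_ext x) \<le> M" using bounded_grad_ext by blast
  have W1B: "(\<integral>\<^sup>+y. ennreal ((W1 (x,y))\<^sup>2) \<partial>lborel) \<le> ennreal ((M * c)\<^sup>2)" for x
    unfolding c_def W1_def using abs_first_moment_le[OF M(2) w(2)]
    by (intro nn_integral_kernel_dominated_le[OF kern d M(1)]) simp
  have W2B: "(\<integral>\<^sup>+y. ennreal ((W2 (x,y))\<^sup>2) \<partial>lborel) \<le> ennreal ((e * c)\<^sup>2)" for x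
    unfolding c_def W2_def W1_def using abs_Gop_sub_first_moment_le[OF kern d taylor]
    by (intro nn_integral_kernel_dominated_le[OF kern d e]) simp
  have qm: "set_borel_measurable lebesgue (D\<times>D) q" and qfin: "L12norm D q < top"
    using q unfolding Qbar_def L12_def D_def by auto
  have int1: "set_integrable lebesgue (D\<times>D) (\<lambda>p. q p * W1 p)"
    using M(1) c0 by (intro set_integrable_L12_pairing[OF qm W1m _ W1B qfin]) simp
  have int2: "set_integrable lebesgue (D\<times>D) (\<lambda>p. q p * W2 p)"
    using e c0 by (intro set_integrable_L12_pairing[OF qm W2m _ W2B qfin]) simp
  have "set_lebesgue_integral lebesgue \<Omega> (\<lambda>x. f x * \<phi> x)
      = - (set_lebesgue_integral lebesgue (D\<times>D) (\<lambda>p. q p * W1 p)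
           + set_lebesgue_integral lebesgue (D\<times>D) (\<lambda>p. q p * W2 p))"
    using Qbar_duality[OF kern d \<Omega>b f q] set_integral_add(2)[OF int1 int2]
    by (simp add: D_def W2_def algebra_simps)
  moreover have "set_lebesgue_integral lebesgue (D\<times>D) (\<lambda>p. q p * W1 p)
      = set_lebesgue_integral lebesgue \<Omega> (\<lambda>x. grad_ext x \<bullet> Rop \<Omega> \<omega> d q x)"
    unfolding W1_def D_def
    by (rule set_integral_first_moment_eq_Rop[OF kern d qm[unfolded D_def] qfin[unfolded D_def]])
  moreover have "\<bar>set_lebesgue_integral lebesgue (D\<times>D) (\<lambda>p. q p * W2 p)\<bar>
      \<le> e * c * enn2real (L12norm D q)"
  proof -
    have "ennreal \<bar>set_lebesgue_integral lebesgue (D\<times>D) (\<lambda>p. q p * W2 p)\<bar>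
        \<le> ennreal (e * c) * L12norm D q"
      using e c0 by (intro abs_set_integral_L12_pairing_le[OF qm W2m _ W2B int2]) simp
    then show ?thesis
      using qfin e c0 by (cases "L12norm D q") (auto simp: ennreal_mult[symmetric] ennreal_le_iff)
  qed
  ultimately show ?thesis by (simp add: D_def c_def)
qed

lemma Rop_pairing_tendsto:
  assumes kern: "admissible_kernels dbar \<omega>" and \<Omega>b: "bounded \<Omega>" and f: "L2on \<Omega> f"
    and deltas: "\<And>k. 0 < \<delta> k" "\<And>k. \<delta> k < dbar" "\<delta> \<longlonglongrightarrow> 0"
    and q: "\<And>k. q k \<in> Qbar \<Omega> \<omega> (\<delta> k) f"
    and bnd: "\<And>k. enn2real (L12norm (Omega_d \<Omega> (\<delta> k)) (q k)) \<le> C"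
  shows "(\<lambda>k. set_lebesgue_integral lebesgue \<Omega> (\<lambda>x. grad_ext x \<bullet> Rop \<Omega> \<omega> (\<delta> k) (q k) x))
           \<longlonglongrightarrow> - set_lebesgue_integral lebesgue \<Omega> (\<lambda>x. f x * \<phi> x)"
    (is "?T \<longlonglongrightarrow> - ?S")
proof (rule LIMSEQ_if_eventually_abs_diff_le_mult)
  fix e :: real assume e: "e > 0"
  then obtain \<eta> where "\<eta> > 0" and taylor: "\<And>x y. norm (y - x) < \<eta> \<Longrightarrow>
      \<bar>ext0 \<Omega> \<phi> y - ext0 \<Omega> \<phi> x - grad_ext x \<bullet> (y - x)\<bar> \<le> e * norm (y - x)"
    using ext0_first_order_uniform by blast
  from deltas(3) \<open>\<eta> > 0\<close> have "eventually (\<lambda>k. \<delta> k < \<eta>) sequentially" by (rule order_tendstoD)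
  then show "eventually (\<lambda>k. \<bar>?T k - - ?S\<bar> \<le> e * (sqrt (inverse (K2n TYPE('a))) * C)) sequentially"
  proof eventually_elim
    case (elim k)
    have "\<bar>?S + ?T k\<bar> \<le> e * sqrt (inverse (K2n TYPE('a))) * enn2real (L12norm (Omega_d \<Omega> (\<delta> k)) (q k))"
      using deltas e taylor elim by (intro Qbar_pairing_defect_le[OF kern _ _ \<Omega>b f q]) auto
    also have "\<dots> \<le> e * sqrt (inverse (K2n TYPE('a))) * C"
      using bnd[of k] e K2n_pos[where 'a='a] by (intro mult_left_mono) auto
    finally show ?case by (simp add: add.commute mult.assoc)
  qed
qed

end

theorem proposition4p12:

  fixes \<Omega> :: "'a::euclidean_space set"
    and f :: "'a \<Rightarrow> real"
    and dbar :: real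
    and \<omega> :: "real \<Rightarrow> 'a \<Rightarrow> real"
    and \<delta> :: "nat \<Rightarrow> real"
    and q :: "nat \<Rightarrow> 'a \<times> 'a \<Rightarrow> real"
    and \<mu> :: "'a measure"
    and h :: "'a \<Rightarrow> 'a"
  assumes dim: "DIM('a) \<ge> 2"
    and dom: "bounded \<Omega>" "connected \<Omega>" "open \<Omega>" "lipschitz_boundary \<Omega>"
    and f: "L2on \<Omega> f"
    and dbar: "dbar > 0"
    and kern: "admissible_kernels dbar \<omega>"
    and deltas: "\<forall>k. 0 < \<delta> k \<and> \<delta> k < dbar" "\<delta> \<longlonglongrightarrow> 0"
    and qQ: "\<forall>k. q k \<in> Qbar \<Omega> \<omega> (\<delta> k) f"
    and bnd: "\<exists>C. \<forall>k. L12norm (Omega_d \<Omega> (\<delta> k)) (q k) \<le> ennreal C"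
    and qhat: "vec_measure_on (closure \<Omega>) \<mu> h"
    and weak: "\<forall>\<psi>::'a \<Rightarrow> 'a. continuous_on (closure \<Omega>) \<psi> \<longrightarrow>
       (\<lambda>k. set_lebesgue_integral lebesgue \<Omega> (\<lambda>x. \<psi> x \<bullet> Rop \<Omega> \<omega> (\<delta> k) (q k) x))
         \<longlonglongrightarrow> integral\<^sup>L \<mu> (\<lambda>x. \<psi> x \<bullet> h x)"
  shows "\<forall>(\<phi>::'a \<Rightarrow> real) (grad\<phi>::'a \<Rightarrow> 'a).
           (\<forall>x\<in>\<Omega>. (\<phi> has_derivative (\<lambda>v. grad\<phi> x \<bullet> v)) (at x)) \<and>
           continuous_on \<Omega> grad\<phi> \<and>
           (\<exists>K. compact K \<and> K \<subseteq> \<Omega> \<and> (\<forall>x\<in>\<Omega> - K. \<phi> x = 0))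
         \<longrightarrow> - integral\<^sup>L \<mu> (\<lambda>x. indicator \<Omega> x * (grad\<phi> x \<bullet> h x))
             = set_lebesgue_integral lebesgue \<Omega> (\<lambda>x. f x * \<phi> x)"
proof (intro allI impI)
  fix \<phi> :: "'a \<Rightarrow> real" and g :: "'a \<Rightarrow> 'a"
  assume "(\<forall>x\<in>\<Omega>. (\<phi> has_derivative (\<lambda>v. g x \<bullet> v)) (at x)) \<and> continuous_on \<Omega> g \<and>
    (\<exists>K. compact K \<and> K \<subseteq> \<Omega> \<and> (\<forall>x\<in>\<Omega> - K. \<phi> x = 0))"
  then obtain K where "C1_test_function \<Omega> \<phi> g K"
    using dom(3) by (auto simp: C1_test_function_def)
  then interpret C1_test_function \<Omega> \<phi> g K .
  obtain C where C: "\<And>k. L12norm (Omega_d \<Omega> (\<delta> k)) (q k) \<le> ennreal C" using bnd by blast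
  have "enn2real (L12norm (Omega_d \<Omega> (\<delta> k)) (q k)) \<le> max C 0" for k
    using enn2real_mono[OF C] by (cases "C \<ge> 0") (auto simp: ennreal_neg)
  then have "(\<lambda>k. set_lebesgue_integral lebesgue \<Omega> (\<lambda>x. grad_ext x \<bullet> Rop \<Omega> \<omega> (\<delta> k) (q k) x))
      \<longlonglongrightarrow> - set_lebesgue_integral lebesgue \<Omega> (\<lambda>x. f x * \<phi> x)"
    using deltas qQ by (intro Rop_pairing_tendsto[OF kern dom(1) f]) auto
  moreover have "continuous_on (closure \<Omega>) grad_ext"
    by (rule continuous_on_subset[OF continuous_on_grad_ext]) simp
  ultimately have "integral\<^sup>L \<mu> (\<lambda>x. grad_ext x \<bullet> h x) = - set_lebesgue_integral lebesgue \<Omega> (\<lambda>x. f x * \<phi> x)"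
    using weak LIMSEQ_unique by blast
  moreover have "integral\<^sup>L \<mu> (\<lambda>x. indicator \<Omega> x * (g x \<bullet> h x)) = integral\<^sup>L \<mu> (\<lambda>x. grad_ext x \<bullet> h x)"
    by (rule Bochner_Integration.integral_cong) (auto simp: grad_ext_def indicator_def)
  ultimately show "- integral\<^sup>L \<mu> (\<lambda>x. indicator \<Omega> x * (g x \<bullet> h x))
      = set_lebesgue_integral lebesgue \<Omega> (\<lambda>x. f x * \<phi> x)"
    by simp
qed

end
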